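(* Let $W:[0,1]^2\to[0,1]$ be a symmetric graphon that is $L$-Lipschitz: $|W(x,y)-W(x',y')|\le L(|x-x'|+|y-y'|)$ for all $(x,y),(x',y')\in[0,1]^2$. Fix $\alpha>1$ and a real polynomial $f$. For each $n\ge1$ let $d=d(n)$ be a positive integer with $d^{1/\alpha}\le n\le d^{\alpha}$, let $G_n\sim\mathcal{G}_W(n)$, and let $X_0^{(n)}\in\mathbb{R}^{n\times d(n)}$ be the Gaussian initialization, independent of $G_n$, all defined on a common probability space. Let $X^{(n)}=f(\mathcal{L}_n)X_0^{(n)}$ and $h_{G_n}=\frac1n\operatorname{Tr}(\mathcal{L}_nX^{(n)}X^{(n)\top})$. Then, almost surely, $$h_{G_n}\xrightarrow[n\to\infty]{}\int_0^1\delta(x)\,f(\delta(x))^2\,dx,$$ where $\delta(x)=\int_0^1W(x,y)\,dy$.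
   Context: A graphon is a symmetric measurable $W:[0,1]^2\to[0,1]$. The random graph $G_n\sim\mathcal{G}_W(n)$ is sampled by drawing $u_1,\dots,u_n\sim\mathrm{Unif}[0,1]$ i.i.d. and then, independently for each pair $i<j$, putting an undirected edge $\{i,j\}$ with probability $W(u_i,u_j)$ (no self-loops). For such a graph with adjacency matrix $\mathbf{A}_n$ and degree matrix $\mathbf{D}_n$, $\mathbf{L}_n=\mathbf{D}_n-\mathbf{A}_n$ and $\mathcal{L}_n=\mathbf{L}_n/n$. Gaussian initialization: $e_1,\dots,e_n\sim\mathcal{N}(0,I_d)$ i.i.d. and $X_0=\frac1{\sqrt d}[e_1,\dots,e_n]^\top\in\mathbb{R}^{n\times d}$. For a polynomial $f(t)=\sum_k a_kt^k$, $f(\mathcal{L}_n)=\sum_ka_k\mathcal{L}_n^k$. The degree function of $W$ is $\delta(x)=\int_0^1W(x,y)\,dy$. *)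

theory Defs
  imports "HOL-Probability.Probability" "HOL-Computational_Algebra.Polynomial"
begin

text \<open>Matrices are represented as functions nat => nat => real; dimensions are explicit.\<close>

definition mmul :: "nat \<Rightarrow> (nat \<Rightarrow> nat \<Rightarrow> real) \<Rightarrow> (nat \<Rightarrow> nat \<Rightarrow> real) \<Rightarrow> (nat \<Rightarrow> nat \<Rightarrow> real)" where
  "mmul m A B = (\<lambda>i j. \<Sum>k<m. A i k * B k j)"

definition mtranspose :: "(nat \<Rightarrow> nat \<Rightarrow> real) \<Rightarrow> (nat \<Rightarrow> nat \<Rightarrow> real)" where
  "mtranspose A = (\<lambda>i j. A j i)"

definition mtrace :: "nat \<Rightarrow> (nat \<Rightarrow> nat \<Rightarrow> real) \<Rightarrow> real" where
  "mtrace n A = (\<Sum>i<n. A i i)"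

primrec mpow :: "nat \<Rightarrow> (nat \<Rightarrow> nat \<Rightarrow> real) \<Rightarrow> nat \<Rightarrow> (nat \<Rightarrow> nat \<Rightarrow> real)" where
  "mpow n A 0 = (\<lambda>i j. if i = j then 1 else 0)"
| "mpow n A (Suc k) = mmul n A (mpow n A k)"

definition poly_mat :: "nat \<Rightarrow> real poly \<Rightarrow> (nat \<Rightarrow> nat \<Rightarrow> real) \<Rightarrow> (nat \<Rightarrow> nat \<Rightarrow> real)" where
  "poly_mat n f A = (\<lambda>i j. \<Sum>k\<le>degree f. coeff f k * mpow n A k i j)"

text \<open>A graph on vertices 0..n-1 is given by its edge indicator on pairs (i,j) with i < j.\<close>
definition adj :: "(nat \<times> nat \<Rightarrow> bool) \<Rightarrow> nat \<Rightarrow> nat \<Rightarrow> real" where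
  "adj G i j = (if i < j then (if G (i, j) then 1 else 0)
                else if j < i then (if G (j, i) then 1 else 0) else 0)"

text \<open>Normalized Laplacian L_n / n = (D_n - A_n) / n.\<close>
definition norm_lap :: "nat \<Rightarrow> (nat \<times> nat \<Rightarrow> bool) \<Rightarrow> nat \<Rightarrow> nat \<Rightarrow> real" where
  "norm_lap n G = (\<lambda>i j. ((if i = j then (\<Sum>l<n. adj G i l) else 0) - adj G i j) / real n)"

text \<open>Gaussian initialization X_0 = d^(-1/2) [e_1,...,e_n]^T with e_i(k) = Z (i,k).\<close>
definition gauss_init :: "nat \<Rightarrow> (nat \<times> nat \<Rightarrow> real) \<Rightarrow> nat \<Rightarrow> nat \<Rightarrow> real" where
  "gauss_init d Z = (\<lambda>i k. Z (i, k) / sqrt (real d))"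

definition h_stat :: "nat \<Rightarrow> nat \<Rightarrow> real poly \<Rightarrow> (nat \<times> nat \<Rightarrow> bool) \<Rightarrow> (nat \<times> nat \<Rightarrow> real) \<Rightarrow> real" where
  "h_stat n d f G Z =
     (let L = norm_lap n G;
          X = mmul n (poly_mat n f L) (gauss_init d Z)
      in mtrace n (mmul n L (mmul d X (mtranspose X))) / real n)"

definition graphon_law :: "(real \<Rightarrow> real \<Rightarrow> real) \<Rightarrow> nat \<Rightarrow> (nat \<times> nat \<Rightarrow> bool) measure" where
  "graphon_law W n =
     bind (PiM {..<n} (\<lambda>_. uniform_measure lborel {0..1::real}))
          (\<lambda>u. PiM {(i, j). i < j \<and> j < n}
                 (\<lambda>p. measure_pmf (bernoulli_pmf (W (u (fst p)) (u (snd p))))))"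

definition gauss_law :: "nat \<Rightarrow> nat \<Rightarrow> (nat \<times> nat \<Rightarrow> real) measure" where
  "gauss_law n d = PiM ({..<n} \<times> {..<d}) (\<lambda>_. density lborel std_normal_density)"

definition sample_law :: "(real \<Rightarrow> real \<Rightarrow> real) \<Rightarrow> nat \<Rightarrow> nat \<Rightarrow> ((nat \<times> nat \<Rightarrow> bool) \<times> (nat \<times> nat \<Rightarrow> real)) measure" where
  "sample_law W n d = graphon_law W n \<Otimes>\<^sub>M gauss_law n d"

definition graphon_degree :: "(real \<Rightarrow> real \<Rightarrow> real) \<Rightarrow> real \<Rightarrow> real" where
  "graphon_degree W x = (LBINT y=0..1. W x y)"

end

theory Submission
  imports Defs "HOL-Real_Asymp.Real_Asymp"
begin

text \<open>Let \<open>B = f(\<L>)\<^sup>T \<L> f(\<L>)\<close>. Conditionally on the graph, \<open>h\<^sub>G\<close> is the Gaussian quadratic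
  form \<open>\<Sum>\<^sub>i\<^sub>j B\<^sub>i\<^sub>j \<langle>e\<^sub>i, e\<^sub>j\<rangle> / (d n)\<close>, with mean \<open>Tr B / n\<close> and variance \<open>O(1/(d n))\<close>; by Chebyshev
  and \<open>n \<le> d\<^sup>\<alpha>\<close> its deviations have summable probabilities. Since \<open>\<L>\<close> is its diagonal degree
  part plus a matrix with entries of size \<open>1/n\<close>, \<open>Tr B = \<Sum>\<^sub>i \<phi>(deg\<^sub>i/n) + O(1)\<close> with
  \<open>\<phi>(x) = x f(x)\<^sup>2\<close>. Conditionally on the latent positions \<open>u\<close>, Hoeffding's inequality gives
  \<open>deg\<^sub>i \<approx> \<Sum>\<^sub>l W(u\<^sub>i, u\<^sub>l)\<close> for all \<open>i\<close>; Hoeffding for the i.i.d. \<open>u\<^sub>l\<close> on a grid, together with the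
  Lipschitz bound, gives \<open>\<Sum>\<^sub>l W(x, u\<^sub>l) \<approx> n \<delta>(x)\<close> uniformly in \<open>x\<close> and
  \<open>\<Sum>\<^sub>l \<phi>(\<delta>(u\<^sub>l)) \<approx> n \<integral> \<phi>\<circ>\<delta>\<close>, all with exponentially small failure probabilities. The
  Borel--Cantelli lemma turns the summable tail bounds into almost sure convergence.\<close>

section \<open>Matrix algebra and absolute row sums\<close>

definition row_bounded :: "nat \<Rightarrow> real \<Rightarrow> (nat \<Rightarrow> nat \<Rightarrow> real) \<Rightarrow> bool" where
  "row_bounded n r A \<longleftrightarrow> (\<forall>i<n. (\<Sum>j<n. \<bar>A i j\<bar>) \<le> r)"

definition rowcol_bounded :: "nat \<Rightarrow> real \<Rightarrow> (nat \<Rightarrow> nat \<Rightarrow> real) \<Rightarrow> bool" where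
  "rowcol_bounded n r A \<longleftrightarrow> row_bounded n r A \<and> row_bounded n r (mtranspose A)"

lemma row_bounded_nonneg: "row_bounded n r A \<Longrightarrow> 0 < n \<Longrightarrow> 0 \<le> r"
  unfolding row_bounded_def by (meson order.trans sum_nonneg abs_ge_zero)

lemma row_bounded_entry: "row_bounded n r A \<Longrightarrow> i < n \<Longrightarrow> j < n \<Longrightarrow> \<bar>A i j\<bar> \<le> r"
  unfolding row_bounded_def by (meson finite_lessThan lessThan_iff member_le_sum abs_ge_zero order.trans)

lemma mmul_assoc: "mmul p (mmul q A B) C = mmul q A (mmul p B C)"
  unfolding mmul_def
  by (auto simp: sum_distrib_left sum_distrib_right mult.assoc intro!: ext sum.swap[THEN trans])

lemma mtranspose_mmul: "mtranspose (mmul q A B) = mmul q (mtranspose B) (mtranspose A)"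
  by (auto simp: mtranspose_def mmul_def mult.commute intro!: ext)

lemma mtrace_mmul_commute: "mtrace n (mmul n A B) = mtrace n (mmul n B A)"
  unfolding mtrace_def mmul_def by (subst sum.swap) (simp add: mult.commute)

lemma mmul_add_left: "mmul n (\<lambda>i j. A i j + B i j) C = (\<lambda>i j. mmul n A C i j + mmul n B C i j)"
  by (simp add: mmul_def distrib_right sum.distrib)

lemma mmul_lincomb_right:
  "mmul n A (\<lambda>i j. \<Sum>k\<in>K. c k * B k i j) = (\<lambda>i j. \<Sum>k\<in>K. c k * mmul n A (B k) i j)"
  by (auto simp: mmul_def sum_distrib_left mult_ac intro!: ext sum.swap[THEN trans])

lemma mtrace_add: "mtrace n (\<lambda>i j. A i j + B i j) = mtrace n A + mtrace n B"
  by (simp add: mtrace_def sum.distrib)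

lemma mtrace_id_mmul: "mtrace n (mmul n (\<lambda>i j. if i = j then 1 else 0) A) = mtrace n A"
  by (simp add: mtrace_def mmul_def if_distrib[where f="\<lambda>x. x * _"] sum.delta cong: if_cong)

lemma row_bounded_mmul:
  assumes A: "row_bounded n r A" and B: "row_bounded n s B"
  shows "row_bounded n (r * s) (mmul n A B)"
  unfolding row_bounded_def
proof (intro allI impI)
  fix i assume i: "i < n"
  then have s: "0 \<le> s" using B row_bounded_nonneg by auto
  have "(\<Sum>j<n. \<bar>mmul n A B i j\<bar>) \<le> (\<Sum>j<n. \<Sum>k<n. \<bar>A i k\<bar> * \<bar>B k j\<bar>)"
    unfolding mmul_def by (intro sum_mono) (auto intro: order.trans[OF sum_abs] simp: abs_mult)
  also have "\<dots> = (\<Sum>k<n. \<bar>A i k\<bar> * (\<Sum>j<n. \<bar>B k j\<bar>))"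
    by (subst sum.swap) (simp add: sum_distrib_left)
  also have "\<dots> \<le> (\<Sum>k<n. \<bar>A i k\<bar> * s)"
    using B by (intro sum_mono mult_left_mono) (auto simp: row_bounded_def)
  also have "\<dots> \<le> r * s"
    using A i s by (auto simp: row_bounded_def sum_distrib_right[symmetric] intro: mult_right_mono)
  finally show "(\<Sum>j<n. \<bar>mmul n A B i j\<bar>) \<le> r * s" .
qed

lemma rowcol_bounded_mmul:
  "rowcol_bounded n r A \<Longrightarrow> rowcol_bounded n s B \<Longrightarrow> rowcol_bounded n (r * s) (mmul n A B)"
  unfolding rowcol_bounded_def mtranspose_mmul
  by (metis mult.commute row_bounded_mmul)

lemma rowcol_bounded_id: "rowcol_bounded n 1 (\<lambda>i j. if i = j then 1 else 0)"
  by (auto simp: rowcol_bounded_def row_bounded_def mtranspose_def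
      if_distrib[where f=abs] sum.delta cong: if_cong)

lemma rowcol_bounded_mpow: "rowcol_bounded n r A \<Longrightarrow> rowcol_bounded n (r ^ k) (mpow n A k)"
  by (induction k) (auto simp: rowcol_bounded_id intro: rowcol_bounded_mmul)

lemma rowcol_bounded_transpose: "rowcol_bounded n r A \<Longrightarrow> rowcol_bounded n r (mtranspose A)"
  by (simp add: rowcol_bounded_def mtranspose_def)

lemma row_bounded_lincomb:
  assumes "finite K" and "\<And>k. k \<in> K \<Longrightarrow> row_bounded n (r k) (A k)"
  shows "row_bounded n (\<Sum>k\<in>K. \<bar>c k\<bar> * r k) (\<lambda>i j. \<Sum>k\<in>K. c k * A k i j)"
  unfolding row_bounded_def
proof (intro allI impI)
  fix i assume i: "i < n"
  have "(\<Sum>j<n. \<bar>\<Sum>k\<in>K. c k * A k i j\<bar>) \<le> (\<Sum>j<n. \<Sum>k\<in>K. \<bar>c k\<bar> * \<bar>A k i j\<bar>)"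
    by (intro sum_mono) (auto intro: order.trans[OF sum_abs] simp: abs_mult)
  also have "\<dots> = (\<Sum>k\<in>K. \<bar>c k\<bar> * (\<Sum>j<n. \<bar>A k i j\<bar>))"
    by (subst sum.swap) (simp add: sum_distrib_left)
  also have "\<dots> \<le> (\<Sum>k\<in>K. \<bar>c k\<bar> * r k)"
    using assms i by (intro sum_mono mult_left_mono) (auto simp: row_bounded_def)
  finally show "(\<Sum>j<n. \<bar>\<Sum>k\<in>K. c k * A k i j\<bar>) \<le> (\<Sum>k\<in>K. \<bar>c k\<bar> * r k)" .
qed

lemma rowcol_bounded_lincomb:
  assumes "finite K" and "\<And>k. k \<in> K \<Longrightarrow> rowcol_bounded n (r k) (A k)"
  shows "rowcol_bounded n (\<Sum>k\<in>K. \<bar>c k\<bar> * r k) (\<lambda>i j. \<Sum>k\<in>K. c k * A k i j)"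
  using row_bounded_lincomb[of K n r A c] row_bounded_lincomb[of K n r "\<lambda>k. mtranspose (A k)" c] assms
  by (simp add: rowcol_bounded_def mtranspose_def)

definition poly_abs :: "real poly \<Rightarrow> real \<Rightarrow> real" where
  "poly_abs f r = (\<Sum>k\<le>degree f. \<bar>coeff f k\<bar> * r ^ k)"

lemma rowcol_bounded_poly_mat: "rowcol_bounded n r A \<Longrightarrow> rowcol_bounded n (poly_abs f r) (poly_mat n f A)"
  unfolding poly_mat_def poly_abs_def by (intro rowcol_bounded_lincomb rowcol_bounded_mpow) auto

lemma mpow_add: "i < n \<Longrightarrow> mmul n (mpow n A a) (mpow n A b) i j = mpow n A (a + b) i j"
proof (induction a arbitrary: i)
  case 0
  then show ?case by (simp add: mmul_def if_distrib[where f="\<lambda>x. x * _"] sum.delta cong: if_cong)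
next
  case (Suc a)
  have "mmul n (mpow n A (Suc a)) (mpow n A b) i j = mmul n A (mmul n (mpow n A a) (mpow n A b)) i j"
    by (simp add: mmul_assoc)
  also have "\<dots> = (\<Sum>l<n. A i l * mpow n A (a + b) l j)"
    unfolding mmul_def[of n A] using Suc.IH by (intro sum.cong) auto
  finally show ?case by (simp add: mmul_def)
qed

lemma mpow_symmetric:
  assumes sym: "\<And>i j. i < n \<Longrightarrow> j < n \<Longrightarrow> A i j = A j i"
  shows "i < n \<Longrightarrow> j < n \<Longrightarrow> mpow n A m i j = mpow n A m j i"
proof (induction m arbitrary: i j)
  case 0 then show ?case by simp
next
  case (Suc m)
  have "mpow n A (Suc m) i j = (\<Sum>l<n. mpow n A m j l * A l i)"
    using Suc by (auto simp: mmul_def sym mult.commute intro!: sum.cong)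
  also have "\<dots> = mmul n (mpow n A m) (mpow n A 1) j i"
    using Suc.prems by (simp add: mmul_def if_distrib[where f="\<lambda>x. _ * x"] sum.delta' cong: if_cong)
  also have "\<dots> = mpow n A (Suc m) j i"
    using mpow_add[OF \<open>j < n\<close>, of A m 1 i] by (simp del: mpow.simps)
  finally show ?case .
qed

lemma mpow_diag:
  assumes "i < n"
  shows "mpow n (\<lambda>i j. if i = j then v i else 0) m i j = (if i = j then v i ^ m else 0)"
  using assms
  by (induction m arbitrary: i)
     (simp_all add: mmul_def if_distrib[where f="\<lambda>x. x * _"] sum.delta cong: if_cong)

lemma mtrace_mpow_diag:
  "mtrace n (mpow n (\<lambda>i j. if i = j then v i else 0) m) = (\<Sum>i<n. v i ^ m)"
  unfolding mtrace_def by (intro sum.cong refl) (simp add: mpow_diag)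

lemma sum_squares_le_if_row_bounded:
  assumes "row_bounded n r B"
  shows "(\<Sum>i<n. \<Sum>j<n. (B i j)\<^sup>2) \<le> real n * r\<^sup>2"
proof -
  have "(\<Sum>j<n. (B i j)\<^sup>2) \<le> r\<^sup>2" if i: "i < n" for i
  proof -
    have "(B i j)\<^sup>2 \<le> r * \<bar>B i j\<bar>" if "j < n" for j
    proof -
      have "(B i j)\<^sup>2 = \<bar>B i j\<bar> * \<bar>B i j\<bar>" by (simp add: power2_eq_square)
      also have "\<dots> \<le> r * \<bar>B i j\<bar>"
        using row_bounded_entry[OF assms i that] by (intro mult_right_mono) auto
      finally show ?thesis .
    qed
    then have "(\<Sum>j<n. (B i j)\<^sup>2) \<le> r * (\<Sum>j<n. \<bar>B i j\<bar>)"
      unfolding sum_distrib_left by (intro sum_mono) auto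
    also have "\<dots> \<le> r * r"
      using assms i row_bounded_nonneg[OF assms] by (intro mult_left_mono) (auto simp: row_bounded_def)
    finally show ?thesis by (simp add: power2_eq_square)
  qed
  then show ?thesis
    using sum_mono[of "{..<n}" "\<lambda>i. \<Sum>j<n. (B i j)\<^sup>2" "\<lambda>_. r\<^sup>2"] by simp
qed

section \<open>The normalised Laplacian and its diagonal part\<close>

definition vertex_degree :: "nat \<Rightarrow> (nat \<times> nat \<Rightarrow> bool) \<Rightarrow> nat \<Rightarrow> real" where
  "vertex_degree n G i = (\<Sum>l<n. adj G i l)"

definition norm_degree_mat :: "nat \<Rightarrow> (nat \<times> nat \<Rightarrow> bool) \<Rightarrow> nat \<Rightarrow> nat \<Rightarrow> real" where
  "norm_degree_mat n G = (\<lambda>i j. if i = j then vertex_degree n G i / real n else 0)"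

lemma adj_nonneg: "0 \<le> adj G i j" and adj_le_1: "adj G i j \<le> 1"
  by (auto simp: adj_def)

lemma adj_diag [simp]: "adj G i i = 0"
  by (simp add: adj_def)

lemma adj_sym: "adj G i j = adj G j i"
  by (auto simp: adj_def)

lemma vertex_degree_nonneg: "0 \<le> vertex_degree n G i"
  unfolding vertex_degree_def by (intro sum_nonneg adj_nonneg)

lemma vertex_degree_le: "vertex_degree n G i \<le> real n"
  using sum_mono[of "{..<n}" "adj G i" "\<lambda>_. 1"] adj_le_1 by (simp add: vertex_degree_def)

lemma scaled_vertex_degree_01: "0 < n \<Longrightarrow> vertex_degree n G i / real n \<in> {0..1}"
  using vertex_degree_nonneg vertex_degree_le by (auto simp: divide_le_eq_1)

lemma norm_lap_eq: "norm_lap n G i j = norm_degree_mat n G i j - adj G i j / real n"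
  by (simp add: norm_lap_def norm_degree_mat_def vertex_degree_def diff_divide_distrib)

lemma norm_lap_sym: "norm_lap n G i j = norm_lap n G j i"
  by (simp add: norm_lap_def adj_sym)

lemma row_sum_norm_degree_mat: "i < n \<Longrightarrow> (\<Sum>j<n. \<bar>norm_degree_mat n G i j\<bar>) = vertex_degree n G i / real n"
  using vertex_degree_nonneg[of n G i]
  by (simp add: norm_degree_mat_def if_distrib[where f=abs] sum.delta cong: if_cong)

lemma rowcol_bounded_norm_degree_mat: "rowcol_bounded n 1 (norm_degree_mat n G)"
proof -
  have "row_bounded n 1 (norm_degree_mat n G)"
    using scaled_vertex_degree_01 by (auto simp: row_bounded_def row_sum_norm_degree_mat)
  moreover have "mtranspose (norm_degree_mat n G) = norm_degree_mat n G"
    by (auto simp: mtranspose_def norm_degree_mat_def intro!: ext)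
  ultimately show ?thesis by (simp add: rowcol_bounded_def)
qed

lemma rowcol_bounded_norm_lap: "rowcol_bounded n 2 (norm_lap n G)"
proof -
  have "(\<Sum>j<n. \<bar>norm_lap n G i j\<bar>) \<le> 2" if i: "i < n" for i
  proof -
    have "(\<Sum>j<n. \<bar>norm_lap n G i j\<bar>) \<le> (\<Sum>j<n. \<bar>norm_degree_mat n G i j\<bar>) + (\<Sum>j<n. adj G i j / real n)"
      unfolding norm_lap_eq sum.distrib[symmetric]
      by (intro sum_mono) (auto intro: order.trans[OF abs_triangle_ineq4] simp: adj_nonneg)
    also have "\<dots> = 2 * (vertex_degree n G i / real n)"
      using i by (simp add: row_sum_norm_degree_mat vertex_degree_def sum_divide_distrib)
    moreover have "vertex_degree n G i / real n \<le> 1"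
      using scaled_vertex_degree_01[of n G i] i by auto
    ultimately show ?thesis by linarith
  qed
  then show ?thesis
    by (auto simp: rowcol_bounded_def row_bounded_def mtranspose_def norm_lap_sym)
qed

lemma abs_mtrace_mmul_entry_bounded:
  assumes Y: "row_bounded n r Y" and P: "row_bounded n q (mtranspose P)"
    and E: "\<And>a b. a < n \<Longrightarrow> b < n \<Longrightarrow> \<bar>E a b\<bar> \<le> e"
  shows "\<bar>mtrace n (mmul n (mmul n Y E) P)\<bar> \<le> real n * e * r * q"
proof (cases "n = 0")
  case True then show ?thesis by (simp add: mtrace_def)
next
  case False
  then have r: "0 \<le> r" and q: "0 \<le> q" and e: "0 \<le> e"
    using row_bounded_nonneg Y P E[of 0 0] by force+
  have "\<bar>mtrace n (mmul n (mmul n Y E) P)\<bar> \<le> (\<Sum>i<n. \<Sum>a<n. \<Sum>b<n. \<bar>Y i a\<bar> * e * \<bar>P b i\<bar>)"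
    unfolding mtrace_def mmul_def sum_distrib_right
    by (subst sum.swap[where A="{..<n}"])
       (intro order.trans[OF sum_abs] sum_mono order.trans[OF sum_abs] sum_mono
         order.trans[OF sum_abs] sum_mono,
        auto simp: abs_mult intro!: mult_right_mono mult_left_mono E)
  also have "\<dots> = (\<Sum>i<n. e * ((\<Sum>a<n. \<bar>Y i a\<bar>) * (\<Sum>b<n. \<bar>P b i\<bar>)))"
    by (simp add: sum_product sum_distrib_left mult_ac)
  also have "\<dots> \<le> (\<Sum>i<n. e * (r * q))"
    using Y P e r by (intro sum_mono mult_left_mono mult_mono)
      (auto simp: row_bounded_def mtranspose_def intro: sum_nonneg)
  finally show ?thesis by (simp add: mult_ac)
qed

text \<open>Replacing the normalised Laplacian by its diagonal part costs \<open>O(1)\<close> in the trace,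
  since the adjacency part has entries of size \<open>1/n\<close>.\<close>

lemma mtrace_norm_lap_pow_approx:
  assumes "rowcol_bounded n s Y" and "0 \<le> s"
  shows "\<bar>mtrace n (mmul n Y (mpow n (norm_lap n G) m)) - mtrace n (mmul n Y (mpow n (norm_degree_mat n G) m))\<bar>
           \<le> s * real m * 2 ^ m"
  using assms
proof (induction m arbitrary: Y s)
  case 0 then show ?case by simp
next
  case (Suc m)
  let ?L = "norm_lap n G" and ?D = "norm_degree_mat n G" and ?E = "\<lambda>i j. - adj G i j / real n"
  have YD: "rowcol_bounded n s (mmul n Y ?D)"
    using rowcol_bounded_mmul[OF Suc.prems(1) rowcol_bounded_norm_degree_mat] by simp
  have "mmul n Y ?L = (\<lambda>i j. mmul n Y ?D i j + mmul n Y ?E i j)"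
    by (auto simp: mmul_def norm_lap_eq right_diff_distrib sum_subtractf sum_negf intro!: ext)
  then have split: "mtrace n (mmul n Y (mpow n ?L (Suc m))) =
      mtrace n (mmul n (mmul n Y ?D) (mpow n ?L m)) + mtrace n (mmul n (mmul n Y ?E) (mpow n ?L m))"
    by (simp add: mmul_assoc[symmetric] mmul_add_left mtrace_add)
  have "\<bar>mtrace n (mmul n (mmul n Y ?E) (mpow n ?L m))\<bar> \<le> real n * (1 / real n) * s * 2 ^ m"
    using Suc.prems(1) rowcol_bounded_mpow[OF rowcol_bounded_norm_lap[of n G], of m]
    by (intro abs_mtrace_mmul_entry_bounded) (auto simp: rowcol_bounded_def adj_le_1 adj_nonneg divide_right_mono)
  also have "\<dots> \<le> s * 2 ^ m"
    using Suc.prems(2) by (cases "n = 0") auto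
  finally show ?case
    using Suc.IH[OF YD Suc.prems(2)] Suc.prems(2) unfolding split
    by (simp add: mmul_assoc algebra_simps abs_le_iff)
qed

definition energy :: "real poly \<Rightarrow> real \<Rightarrow> real" where
  "energy f x = x * (poly f x)\<^sup>2"

lemma energy_expand:
  "energy f x = (\<Sum>p\<le>degree f. \<Sum>q\<le>degree f. coeff f p * coeff f q * x ^ (p + q + 1))"
  unfolding energy_def power2_eq_square poly_altdef
  by (simp add: sum_distrib_left sum_distrib_right power_add mult_ac)

lemma mtrace_poly_mat_quadratic:
  assumes sym: "\<And>i j. i < n \<Longrightarrow> j < n \<Longrightarrow> A i j = A j i"
  shows "mtrace n (mmul n (mtranspose (poly_mat n f A)) (mmul n A (poly_mat n f A)))
    = (\<Sum>p\<le>degree f. \<Sum>q\<le>degree f. coeff f p * coeff f q * mtrace n (mpow n A (p + q + 1)))"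
proof -
  let ?P = "mpow n A"
  have "(\<Sum>a<n. ?P p a i * ?P (Suc q) a i) = mmul n (?P p) (?P (Suc q)) i i" if "i < n" for p q i
    unfolding mmul_def using that by (intro sum.cong refl) (simp add: mpow_symmetric[OF sym] del: mpow.simps)
  then have pair: "(\<Sum>i<n. \<Sum>a<n. ?P p a i * ?P (Suc q) a i) = mtrace n (?P (p + q + 1))" for p q
    unfolding mtrace_def by (intro sum.cong refl) (simp add: mpow_add del: mpow.simps)
  have LF: "mmul n A (poly_mat n f A) = (\<lambda>a i. \<Sum>q\<le>degree f. coeff f q * ?P (Suc q) a i)"
    unfolding poly_mat_def mmul_lincomb_right by simp
  have "mtrace n (mmul n (mtranspose (poly_mat n f A)) (mmul n A (poly_mat n f A)))
      = (\<Sum>i<n. \<Sum>a<n. (\<Sum>p\<le>degree f. coeff f p * ?P p a i) * (\<Sum>q\<le>degree f. coeff f q * ?P (Suc q) a i))"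
    unfolding LF by (simp add: mtrace_def mtranspose_def poly_mat_def mmul_def del: mpow.simps)
  also have "\<dots> = (\<Sum>p\<le>degree f. \<Sum>q\<le>degree f. coeff f p * coeff f q * (\<Sum>i<n. \<Sum>a<n. ?P p a i * ?P (Suc q) a i))"
    by (simp only: sum_product sum.swap[where A="{..<n}" and B="{..degree f}"]) (simp only: sum_distrib_left mult_ac)
  finally show ?thesis by (simp add: pair del: mpow.simps)
qed

definition trace_approx_const :: "real poly \<Rightarrow> real" where
  "trace_approx_const f =
     (\<Sum>p\<le>degree f. \<Sum>q\<le>degree f. \<bar>coeff f p * coeff f q\<bar> * (real (p + q + 1) * 2 ^ (p + q + 1)))"

definition energy_mat :: "nat \<Rightarrow> real poly \<Rightarrow> (nat \<times> nat \<Rightarrow> bool) \<Rightarrow> nat \<Rightarrow> nat \<Rightarrow> real" where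
  "energy_mat n f G = mmul n (mtranspose (poly_mat n f (norm_lap n G)))
                        (mmul n (norm_lap n G) (poly_mat n f (norm_lap n G)))"

lemma mtrace_energy_mat_approx:
  "\<bar>mtrace n (energy_mat n f G) - (\<Sum>i<n. energy f (vertex_degree n G i / real n))\<bar> \<le> trace_approx_const f"
proof -
  let ?c = "\<lambda>p q. coeff f p * coeff f q" and ?e = "\<lambda>p q. p + q + 1"
  have "(\<Sum>i<n. energy f (vertex_degree n G i / real n))
      = (\<Sum>p\<le>degree f. \<Sum>q\<le>degree f. ?c p q * mtrace n (mpow n (norm_degree_mat n G) (?e p q)))"
    unfolding energy_expand norm_degree_mat_def mtrace_mpow_diag
    by (simp add: sum_distrib_left sum.swap[of _ "{..<n}"])
  moreover have "mtrace n (energy_mat n f G)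
      = (\<Sum>p\<le>degree f. \<Sum>q\<le>degree f. ?c p q * mtrace n (mpow n (norm_lap n G) (?e p q)))"
    unfolding energy_mat_def by (rule mtrace_poly_mat_quadratic[OF norm_lap_sym])
  moreover have "\<bar>?c p q * (mtrace n (mpow n (norm_lap n G) (?e p q)) - mtrace n (mpow n (norm_degree_mat n G) (?e p q)))\<bar>
      \<le> \<bar>?c p q\<bar> * (real (?e p q) * 2 ^ ?e p q)" for p q
    using mtrace_norm_lap_pow_approx[OF rowcol_bounded_id zero_le_one, of n G "?e p q"]
    by (simp add: abs_mult mtrace_id_mmul mult_left_mono del: mpow.simps)
  ultimately show ?thesis
    unfolding trace_approx_const_def
    by (simp add: sum_subtractf[symmetric] right_diff_distrib[symmetric] del: mpow.simps)
       (intro order.trans[OF sum_abs] sum_mono order.trans[OF sum_abs])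
qed

lemma power_diff_abs_le:
  fixes x y :: real
  assumes "x \<in> {0..1}" "y \<in> {0..1}"
  shows "\<bar>x ^ k - y ^ k\<bar> \<le> real k * \<bar>x - y\<bar>"
proof (induction k)
  case 0 then show ?case by simp
next
  case (Suc k)
  have "x ^ Suc k - y ^ Suc k = x * (x ^ k - y ^ k) + y ^ k * (x - y)"
    by (simp add: algebra_simps)
  then have "\<bar>x ^ Suc k - y ^ Suc k\<bar> \<le> \<bar>x\<bar> * \<bar>x ^ k - y ^ k\<bar> + \<bar>y ^ k\<bar> * \<bar>x - y\<bar>"
    by (metis abs_mult abs_triangle_ineq)
  also have "\<dots> \<le> 1 * (real k * \<bar>x - y\<bar>) + 1 * \<bar>x - y\<bar>"
    using assms Suc by (intro add_mono mult_mono) (auto simp: power_le_one abs_le_iff)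
  finally show ?case by (simp add: algebra_simps)
qed

definition energy_lipschitz_const :: "real poly \<Rightarrow> real" where
  "energy_lipschitz_const f = (\<Sum>p\<le>degree f. \<Sum>q\<le>degree f. \<bar>coeff f p * coeff f q\<bar> * real (p + q + 1))"

text \<open>The summand \<open>1\<close> keeps the interval \<open>[-energy_sup f, energy_sup f]\<close> used in Hoeffding's
  inequality non-degenerate.\<close>

definition energy_sup :: "real poly \<Rightarrow> real" where
  "energy_sup f = 1 + (\<Sum>p\<le>degree f. \<Sum>q\<le>degree f. \<bar>coeff f p * coeff f q\<bar>)"

lemma energy_lipschitz_const_nonneg: "0 \<le> energy_lipschitz_const f"
  unfolding energy_lipschitz_const_def by (intro sum_nonneg) auto

lemma energy_sup_ge_1: "1 \<le> energy_sup f"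
  unfolding energy_sup_def by (auto intro!: sum_nonneg)

lemma energy_lipschitz:
  assumes "x \<in> {0..1}" "y \<in> {0..1}"
  shows "\<bar>energy f x - energy f y\<bar> \<le> energy_lipschitz_const f * \<bar>x - y\<bar>"
proof -
  have "\<bar>energy f x - energy f y\<bar>
      = \<bar>\<Sum>p\<le>degree f. \<Sum>q\<le>degree f. coeff f p * coeff f q * (x ^ (p + q + 1) - y ^ (p + q + 1))\<bar>"
    unfolding energy_expand by (simp add: sum_subtractf right_diff_distrib)
  also have "\<dots> \<le> (\<Sum>p\<le>degree f. \<Sum>q\<le>degree f. \<bar>coeff f p * coeff f q\<bar> * (real (p + q + 1) * \<bar>x - y\<bar>))"
    by (intro order.trans[OF sum_abs] sum_mono order.trans[OF sum_abs])
       (simp only: abs_mult[of "coeff f _ * coeff f _"] mult_left_mono[OF power_diff_abs_le[OF assms]] abs_ge_zero)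
  also have "\<dots> = energy_lipschitz_const f * \<bar>x - y\<bar>"
    by (simp add: energy_lipschitz_const_def sum_distrib_right sum_distrib_left mult_ac)
  finally show ?thesis .
qed

lemma abs_energy_le:
  assumes "x \<in> {0..1}"
  shows "\<bar>energy f x\<bar> \<le> energy_sup f"
proof -
  have "\<bar>x ^ k\<bar> \<le> 1" for k
    using assms by (simp add: abs_le_iff power_le_one)
  then have "\<bar>energy f x\<bar> \<le> (\<Sum>p\<le>degree f. \<Sum>q\<le>degree f. \<bar>coeff f p * coeff f q\<bar> * 1)"
    unfolding energy_expand
    by (intro order.trans[OF sum_abs] sum_mono order.trans[OF sum_abs])
       (simp only: abs_mult[of "coeff f _ * coeff f _"] mult_left_mono abs_ge_zero)
  then show ?thesis by (simp add: energy_sup_def)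
qed

lemma borel_measurable_energy: "g \<in> borel_measurable M \<Longrightarrow> (\<lambda>x. energy f (g x)) \<in> borel_measurable M"
  unfolding energy_expand by measurable

definition energy_mat_bound :: "real poly \<Rightarrow> real" where
  "energy_mat_bound f = 2 * (poly_abs f 2)\<^sup>2"

lemma rowcol_bounded_energy_mat: "rowcol_bounded n (energy_mat_bound f) (energy_mat n f G)"
proof -
  have "rowcol_bounded n (poly_abs f 2) (poly_mat n f (norm_lap n G))"
    by (rule rowcol_bounded_poly_mat[OF rowcol_bounded_norm_lap])
  then have "rowcol_bounded n (poly_abs f 2 * (2 * poly_abs f 2)) (energy_mat n f G)"
    unfolding energy_mat_def by (intro rowcol_bounded_mmul rowcol_bounded_transpose rowcol_bounded_norm_lap)
  then show ?thesis by (simp add: energy_mat_bound_def power2_eq_square mult_ac)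
qed

section \<open>Quadratic forms in Gaussian vectors\<close>

definition gauss_quad_form :: "nat \<Rightarrow> nat \<Rightarrow> (nat \<Rightarrow> nat \<Rightarrow> real) \<Rightarrow> (nat \<times> nat \<Rightarrow> real) \<Rightarrow> real" where
  "gauss_quad_form n d B z = (\<Sum>i<n. \<Sum>j<n. B i j * (\<Sum>k<d. z (i, k) * z (j, k)))"

text \<open>With \<open>X = f(\<L>) X\<^sub>0\<close>, cyclicity of the trace gives
  \<open>Tr(\<L> X X\<^sup>T) = Tr(X\<^sub>0 X\<^sub>0\<^sup>T f(\<L>)\<^sup>T \<L> f(\<L>))\<close>.\<close>

lemma h_stat_eq_gauss_quad_form:
  "h_stat n d f G Z = gauss_quad_form n d (energy_mat n f G) Z / (real d * real n)"
proof -
  let ?L = "norm_lap n G" and ?F = "poly_mat n f (norm_lap n G)" and ?X0 = "gauss_init d Z"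
  let ?Y = "mmul d ?X0 (mtranspose ?X0)"
  have "mtrace n (mmul n ?L (mmul d (mmul n ?F ?X0) (mtranspose (mmul n ?F ?X0))))
      = mtrace n (mmul n (mmul n ?L ?F) (mmul n ?Y (mtranspose ?F)))"
    by (simp add: mtranspose_mmul mmul_assoc)
  also have "\<dots> = mtrace n (mmul n ?Y (energy_mat n f G))"
    by (subst mtrace_mmul_commute) (simp add: mmul_assoc energy_mat_def)
  also have "\<dots> = gauss_quad_form n d (energy_mat n f G) Z / real d"
    unfolding gauss_quad_form_def mtrace_def mmul_def mtranspose_def gauss_init_def
    by (subst sum.swap)
       (simp add: sum_divide_distrib sum_distrib_left mult_ac real_sqrt_mult[symmetric])
  finally show ?thesis
    by (simp add: h_stat_def Let_def)
qed

abbreviation std_normal :: "real measure" where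
  "std_normal \<equiv> density lborel std_normal_density"

lemma prob_space_std_normal: "prob_space std_normal"
  by (intro prob_space_normal_density) simp

definition gauss_moment :: "nat \<Rightarrow> real" where
  "gauss_moment k = (if odd k then 0 else fact k / (2 ^ (k div 2) * fact (k div 2)))"

lemma has_bochner_integral_std_normal_power:
  "has_bochner_integral std_normal (\<lambda>x. x ^ k) (gauss_moment k)"
proof -
  have "integrable std_normal (\<lambda>x. x ^ k)"
    by (subst integrable_density) (auto simp: integrable_std_normal_moment)
  moreover have "integral\<^sup>L std_normal (\<lambda>x. x ^ k) = gauss_moment k"
  proof (cases "even k")
    case True
    then show ?thesis
      using integral_std_normal_moment_even[of "k div 2"]
      by (subst integral_density) (auto simp: gauss_moment_def)
  next
    case False
    then obtain j where "k = 2 * j + 1" by (metis oddE)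
    then show ?thesis
      using integral_std_normal_moment_odd[of j]
      by (subst integral_density) (auto simp: gauss_moment_def)
  qed
  ultimately show ?thesis by (simp add: has_bochner_integral_iff)
qed

lemma has_bochner_integral_gauss_monomial:
  fixes I :: "'i set"
  assumes "finite I"
  shows "has_bochner_integral (PiM I (\<lambda>_. std_normal)) (\<lambda>x. \<Prod>i\<in>I. x i ^ c i) (\<Prod>i\<in>I. gauss_moment (c i))"
proof -
  interpret std_normal: prob_space std_normal by (rule prob_space_std_normal)
  interpret product_sigma_finite "\<lambda>_::'i. std_normal" by unfold_locales
  have "integrable std_normal (\<lambda>x. x ^ c i)" "integral\<^sup>L std_normal (\<lambda>x. x ^ c i) = gauss_moment (c i)" for i
    using has_bochner_integral_std_normal_power by (auto simp: has_bochner_integral_iff)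
  then show ?thesis
    using product_integrable_prod[OF assms, of "\<lambda>i x. x ^ c i"] product_integral_prod[OF assms, of "\<lambda>i x. x ^ c i"]
    by (simp add: has_bochner_integral_iff)
qed

lemma prod_power_indicator:
  "finite I \<Longrightarrow> a \<in> I \<Longrightarrow> (\<Prod>i\<in>I. (x i :: real) ^ (if a = i then 1 else 0)) = x a"
  by (simp add: if_distrib[where f="\<lambda>k. _ ^ k"] prod.delta cong: if_cong)

lemma has_bochner_integral_gauss_pair:
  fixes I :: "'i set"
  assumes I: "finite I" and ab: "a \<in> I" "b \<in> I"
  shows "has_bochner_integral (PiM I (\<lambda>_. std_normal)) (\<lambda>x. x a * x b) (if a = b then 1 else 0)"
proof -
  define c where "c i = (if a = i then 1 else 0) + (if b = i then 1 else 0 :: nat)" for i :: 'i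
  have "(\<Prod>i\<in>I. x i ^ c i) = x a * x b" for x :: "'i \<Rightarrow> real"
    unfolding c_def power_add prod.distrib using I ab by (simp add: prod_power_indicator)
  moreover have "(\<Prod>i\<in>I. gauss_moment (c i)) = (\<Prod>i\<in>{a, b}. gauss_moment (c i))"
    using I ab by (intro prod.mono_neutral_right) (auto simp: c_def gauss_moment_def)
  moreover have "\<dots> = (if a = b then 1 else 0)"
    by (cases "a = b") (simp_all add: c_def gauss_moment_def)
  ultimately show ?thesis
    using has_bochner_integral_gauss_monomial[OF I, of c] by simp
qed

text \<open>Isserlis' theorem for fourth moments.\<close>

lemma has_bochner_integral_gauss_quadruple:
  fixes I :: "'i set"
  assumes I: "finite I" and abce: "a \<in> I" "b \<in> I" "c \<in> I" "e \<in> I"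
  shows "has_bochner_integral (PiM I (\<lambda>_. std_normal)) (\<lambda>x. x a * (x b * (x c * x e)))
    ((if a = b \<and> c = e then 1 else 0) + (if a = c \<and> b = e then 1 else 0) + (if a = e \<and> b = c then 1 else 0))"
proof -
  define k where "k i = (if a = i then 1 else 0) + (if b = i then 1 else 0) + (if c = i then 1 else 0)
                        + (if e = i then 1 else 0 :: nat)" for i :: 'i
  have "(\<Prod>i\<in>I. x i ^ k i) = x a * (x b * (x c * x e))" for x :: "'i \<Rightarrow> real"
    unfolding k_def power_add prod.distrib using I abce by (simp add: prod_power_indicator)
  moreover have "(\<Prod>i\<in>I. gauss_moment (k i)) = (\<Prod>i\<in>{a, b, c, e}. gauss_moment (k i))"
    using I abce by (intro prod.mono_neutral_right) (auto simp: k_def gauss_moment_def)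
  moreover have "\<dots> = (if a = b \<and> c = e then 1 else 0) + (if a = c \<and> b = e then 1 else 0) + (if a = e \<and> b = c then 1 else 0)"
    unfolding k_def
    by (cases "a = b"; cases "a = c"; cases "a = e"; cases "b = c"; cases "b = e"; cases "c = e")
       (simp_all add: gauss_moment_def insert_commute fact_numeral)
  ultimately show ?thesis
    using has_bochner_integral_gauss_monomial[OF I, of k] by simp
qed

lemma prob_space_gauss_law: "prob_space (gauss_law n d)"
  unfolding gauss_law_def by (intro prob_space_PiM prob_space_std_normal)

lemma has_bochner_integral_gauss_quad_form:
  "has_bochner_integral (gauss_law n d) (gauss_quad_form n d B) (real d * (\<Sum>i<n. B i i))"
proof -
  have "has_bochner_integral (gauss_law n d) (gauss_quad_form n d B)
     (\<Sum>i<n. \<Sum>j<n. B i j * (\<Sum>k<d. if (i, k) = (j, k) then 1 else 0))"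
    unfolding gauss_quad_form_def gauss_law_def
    by (intro has_bochner_integral_sum has_bochner_integral_mult_right has_bochner_integral_gauss_pair) auto
  moreover have "(\<Sum>i<n. \<Sum>j<n. B i j * (\<Sum>k<d. if (i, k) = (j, k) then 1 else 0)) = real d * (\<Sum>i<n. B i i)"
    by (simp add: if_distrib[where f="\<lambda>x. _ * x"] sum.delta sum_distrib_left mult.commute cong: if_cong)
  ultimately show ?thesis by simp
qed

lemma has_bochner_integral_gauss_quad_form_sq:
  "has_bochner_integral (gauss_law n d) (\<lambda>z. (gauss_quad_form n d B z)\<^sup>2)
     ((real d * (\<Sum>i<n. B i i))\<^sup>2 + real d * (\<Sum>i<n. \<Sum>j<n. (B i j)\<^sup>2) + real d * (\<Sum>i<n. \<Sum>j<n. B i j * B j i))"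
proof -
  let ?\<delta> = "\<lambda>p q r s :: nat \<times> nat. if p = q \<and> r = s then 1 else (0::real)"
  let ?S = "\<lambda>w. \<Sum>i<n. \<Sum>i'<n. \<Sum>j'<n. \<Sum>j<n. \<Sum>k'<d. \<Sum>k<d. B i j * (B i' j' * w (i, k) (i', k') (j', k') (j, k))"
  have sum_if: "(\<Sum>x\<in>A. if P then g x else 0) = (if P then sum g A else 0)" for P A and g :: "nat \<Rightarrow> real"
    by simp
  have sq: "(gauss_quad_form n d B z)\<^sup>2 = ?S (\<lambda>p q r s. z p * (z q * (z r * z s)))" for z
    unfolding gauss_quad_form_def power2_eq_square
    by (simp add: sum_distrib_left sum_distrib_right mult_ac)
  have "has_bochner_integral (gauss_law n d) (\<lambda>z. (gauss_quad_form n d B z)\<^sup>2)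
      (?S (\<lambda>p q r s. ?\<delta> p q r s + ?\<delta> p r q s + ?\<delta> p s q r))"
    unfolding sq gauss_law_def
    by (intro has_bochner_integral_sum has_bochner_integral_mult_right has_bochner_integral_gauss_quadruple) auto
  moreover have "?S (\<lambda>p q r s. ?\<delta> p q r s) = real d * (\<Sum>i<n. \<Sum>j<n. (B i j)\<^sup>2)"
    and "?S (\<lambda>p q r s. ?\<delta> p r q s) = real d * (\<Sum>i<n. \<Sum>j<n. B i j * B j i)"
    and "?S (\<lambda>p q r s. ?\<delta> p s q r) = (real d * (\<Sum>i<n. B i i))\<^sup>2"
    by (simp_all add: sum_if if_if_eq_conj[symmetric] if_distrib[where f="\<lambda>x. _ * x"] sum.delta sum.delta'
        power2_eq_square sum_distrib_left sum_distrib_right mult_ac cong: if_cong)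
  ultimately show ?thesis
    by (simp add: distrib_left sum.distrib add_ac)
qed

lemma sum_mult_transpose_le_sum_squares:
  "(\<Sum>i<n. \<Sum>j<n. B i j * B j i) \<le> (\<Sum>i<n. \<Sum>j<n. (B i j)\<^sup>2 :: real)"
proof -
  have "(\<Sum>i<n. \<Sum>j<n. B i j * B j i) \<le> (\<Sum>i<n. \<Sum>j<n. ((B i j)\<^sup>2 + (B j i)\<^sup>2) / 2)"
    using sum_squares_bound by (intro sum_mono) (simp add: field_simps)
  also have "\<dots> = ((\<Sum>i<n. \<Sum>j<n. (B i j)\<^sup>2) + (\<Sum>i<n. \<Sum>j<n. (B j i)\<^sup>2)) / 2"
    by (simp only: sum_divide_distrib[symmetric] sum.distrib)
  also have "(\<Sum>i<n. \<Sum>j<n. (B j i)\<^sup>2) = (\<Sum>i<n. \<Sum>j<n. (B i j)\<^sup>2)"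
    by (rule sum.swap)
  finally show ?thesis by simp
qed

lemma measure_gauss_quad_form_deviation:
  assumes a: "a > 0"
  shows "measure (gauss_law n d) {z \<in> space (gauss_law n d). a \<le> \<bar>gauss_quad_form n d B z - real d * (\<Sum>i<n. B i i)\<bar>}
           \<le> 2 * real d * (\<Sum>i<n. \<Sum>j<n. (B i j)\<^sup>2) / a\<^sup>2"
proof -
  interpret prob_space "gauss_law n d" by (rule prob_space_gauss_law)
  let ?Q = "gauss_quad_form n d B"
  have i1: "integrable (gauss_law n d) ?Q" and e1: "expectation ?Q = real d * (\<Sum>i<n. B i i)"
    and i2: "integrable (gauss_law n d) (\<lambda>z. (?Q z)\<^sup>2)"
    and e2: "expectation (\<lambda>z. (?Q z)\<^sup>2) = (real d * (\<Sum>i<n. B i i))\<^sup>2 + real d * (\<Sum>i<n. \<Sum>j<n. (B i j)\<^sup>2)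
                                         + real d * (\<Sum>i<n. \<Sum>j<n. B i j * B j i)"
    using has_bochner_integral_gauss_quad_form[of n d B] has_bochner_integral_gauss_quad_form_sq[of n d B]
    by (simp_all add: has_bochner_integral_iff)
  have "prob {z \<in> space (gauss_law n d). a \<le> \<bar>?Q z - real d * (\<Sum>i<n. B i i)\<bar>} \<le> variance ?Q / a\<^sup>2"
    using Chebyshev_inequality[OF borel_measurable_integrable[OF i1] _ a] i2 e1 by simp
  also have "\<dots> \<le> 2 * real d * (\<Sum>i<n. \<Sum>j<n. (B i j)\<^sup>2) / a\<^sup>2"
    using variance_eq[OF i1 i2] e1 e2 sum_mult_transpose_le_sum_squares[of B n]
    by (intro divide_right_mono) (auto intro!: mult_left_mono simp: algebra_simps)
  finally show ?thesis .
qed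

lemma measure_gauss_h_stat_deviation:
  assumes "0 < n" "0 < d" "0 < t"
  shows "measure (gauss_law n d) {z \<in> space (gauss_law n d).
           t \<le> \<bar>h_stat n d f G z - mtrace n (energy_mat n f G) / real n\<bar>}
         \<le> 2 * (energy_mat_bound f)\<^sup>2 / (t\<^sup>2 * real d * real n)"
proof -
  let ?B = "energy_mat n f G"
  have dn: "0 < real d * real n" using assms by simp
  have "mtrace n ?B / real n = real d * (\<Sum>i<n. ?B i i) / (real d * real n)"
    using assms by (simp add: mtrace_def)
  then have "h_stat n d f G z - mtrace n ?B / real n
      = (gauss_quad_form n d ?B z - real d * (\<Sum>i<n. ?B i i)) / (real d * real n)" for z
    by (simp add: h_stat_eq_gauss_quad_form diff_divide_distrib)
  then have eq: "{z \<in> space (gauss_law n d). t \<le> \<bar>h_stat n d f G z - mtrace n ?B / real n\<bar>}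
      = {z \<in> space (gauss_law n d). t * (real d * real n) \<le> \<bar>gauss_quad_form n d ?B z - real d * (\<Sum>i<n. ?B i i)\<bar>}"
    using dn by (simp add: le_divide_eq)
  have "measure (gauss_law n d) {z \<in> space (gauss_law n d).
      t * (real d * real n) \<le> \<bar>gauss_quad_form n d ?B z - real d * (\<Sum>i<n. ?B i i)\<bar>} \<le> 2 * real d * (\<Sum>i<n. \<Sum>j<n. (?B i j)\<^sup>2) / (t * (real d * real n))\<^sup>2"
    using assms by (intro measure_gauss_quad_form_deviation) simp
  also have "\<dots> \<le> 2 * real d * (real n * (energy_mat_bound f)\<^sup>2) / (t * (real d * real n))\<^sup>2"
    using sum_squares_le_if_row_bounded[of n "energy_mat_bound f" ?B] rowcol_bounded_energy_mat[of n f G]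
    by (intro divide_right_mono mult_left_mono) (auto simp: rowcol_bounded_def)
  also have "\<dots> = 2 * (energy_mat_bound f)\<^sup>2 / (t\<^sup>2 * real d * real n)"
    using assms by (simp add: field_simps power2_eq_square)
  finally show ?thesis
    unfolding eq .
qed

section \<open>Tools from measure theory\<close>

text \<open>A non-measurable map pushes a measure forward to the zero measure: the set function
  \<open>B \<mapsto> M (f -` B)\<close> vanishes on a set with non-measurable preimage and on its complement,
  so it is not additive and \<open>measure_of\<close> returns zero.\<close>

lemma emeasure_distr_nonmeasurable:
  assumes f: "f \<in> space M \<rightarrow> space N" and nm: "f \<notin> measurable M N"
    and pos: "emeasure M (space M) \<noteq> 0"
  shows "emeasure (distr M N f) A = 0"
proof -
  obtain B where B: "B \<in> sets N" "f -` B \<inter> space M \<notin> sets M"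
    using nm f unfolding measurable_def by auto
  have "f -` (space N - B) \<inter> space M = space M - (f -` B \<inter> space M)"
    using f by auto
  then have B': "f -` (space N - B) \<inter> space M \<notin> sets M"
    using B(2) by (metis Diff_Diff_Int Int_lower2 inf.absorb_iff2 sets.Diff sets.top)
  define \<mu> where "\<mu> = (\<lambda>C. emeasure M (f -` C \<inter> space M))"
  have "\<not> measure_space (space N) (sets N) \<mu>"
  proof
    assume "measure_space (space N) (sets N) \<mu>"
    then have "additive (sets N) \<mu>"
      unfolding measure_space_def
      by (intro ring_of_sets.countably_additive_additive[OF sets.ring_of_sets_axioms]) auto
    then have "\<mu> (B \<union> (space N - B)) = \<mu> B + \<mu> (space N - B)"
      using B(1) unfolding additive_def by blast
    moreover have "\<mu> (B \<union> (space N - B)) = emeasure M (space M)"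
      using f sets.sets_into_space[OF B(1)] by (auto simp: \<mu>_def Un_absorb1 intro!: arg_cong[where f="emeasure M"])
    moreover have "\<mu> B = 0" "\<mu> (space N - B) = 0"
      using B(2) B' by (simp_all add: \<mu>_def emeasure_notin_sets)
    ultimately show False using pos by simp
  qed
  then show ?thesis
    unfolding distr_def emeasure_measure_of_conv sets.sigma_sets_eq by (simp add: \<mu>_def)
qed

lemma emeasure_bind_nonmeasurable:
  assumes ne: "space M \<noteq> {}" and sets_f: "\<And>x. x \<in> space M \<Longrightarrow> sets (f x) = sets N"
    and sub: "\<And>x. x \<in> space M \<Longrightarrow> subprob_space (f x)"
    and pos: "emeasure M (space M) \<noteq> 0" and nm: "f \<notin> measurable M (subprob_algebra N)"
  shows "emeasure (bind M f) A = 0"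
proof -
  let ?S = "subprob_algebra N"
  have "subprob_algebra (f (SOME x. x \<in> space M)) = ?S"
    using ne by (intro subprob_algebra_cong sets_f) (simp add: some_in_eq)
  then have bind_eq: "bind M f = join (distr M ?S f)"
    unfolding bind_nonempty[OF ne] by simp
  have "f \<in> space M \<rightarrow> space ?S"
    using sets_f sub by (auto simp: space_subprob_algebra)
  then have "distr M ?S f = null_measure (distr M ?S f)"
    using nm pos by (intro measure_eqI) (simp_all add: emeasure_distr_nonmeasurable)
  then have "(\<integral>\<^sup>+ M'. emeasure M' A \<partial>distr M ?S f) = 0"
    by (metis nn_integral_null_measure)
  then show ?thesis
    unfolding bind_eq join_def emeasure_measure_of_conv by simp
qed

lemma indep_vars_PiM_components:
  assumes "I \<noteq> {}" and P: "\<And>i. i \<in> I \<Longrightarrow> prob_space (M i)"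
  shows "prob_space.indep_vars (PiM I M) M (\<lambda>i x. x i) I"
proof -
  interpret prob_space "PiM I M" by (rule prob_space_PiM[OF P])
  have "distr (PiM I M) (PiM I M) (\<lambda>x. \<lambda>i\<in>I. x i) = distr (PiM I M) (PiM I M) (\<lambda>x. x)"
    by (rule distr_cong) (auto simp: space_PiM PiE_def extensional_restrict)
  also have "\<dots> = PiM I (\<lambda>i. distr (PiM I M) (M i) (\<lambda>x. x i))"
    by (auto simp: distr_PiM_component[of I M, OF P] intro!: PiM_cong)
  finally show ?thesis
    by (subst indep_vars_iff_distr_eq_PiM'[OF assms(1)]) auto
qed

lemma integral_PiM_component:
  fixes g :: "'b \<Rightarrow> real"
  assumes P: "\<And>i. i \<in> I \<Longrightarrow> prob_space (M i)" and i: "i \<in> I" and g: "g \<in> borel_measurable (M i)"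
  shows "integral\<^sup>L (PiM I M) (\<lambda>x. g (x i)) = integral\<^sup>L (M i) g"
proof -
  have "integral\<^sup>L (M i) g = integral\<^sup>L (distr (PiM I M) (M i) (\<lambda>x. x i)) g"
    by (simp add: distr_PiM_component[of I M, OF P i])
  also have "\<dots> = integral\<^sup>L (PiM I M) (\<lambda>x. g (x i))"
    using i g by (intro integral_distr) auto
  finally show ?thesis by simp
qed

lemma Hoeffding_PiM_components:
  fixes g :: "'i \<Rightarrow> 'b \<Rightarrow> real"
  assumes J: "finite J" "J \<subseteq> I" "J \<noteq> {}" and P: "\<And>i. i \<in> I \<Longrightarrow> prob_space (M i)"
    and g: "\<And>i. i \<in> J \<Longrightarrow> g i \<in> borel_measurable (M i)"
    and ab: "\<And>i. i \<in> J \<Longrightarrow> AE x in M i. g i x \<in> {a..b}" and "a < b" and "0 \<le> \<epsilon>"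
  shows "measure (PiM I M) {x \<in> space (PiM I M). \<epsilon> \<le> \<bar>(\<Sum>i\<in>J. g i (x i)) - (\<Sum>i\<in>J. integral\<^sup>L (M i) (g i))\<bar>}
          \<le> 2 * exp (- 2 * \<epsilon>\<^sup>2 / (real (card J) * (b - a)\<^sup>2))"
proof -
  interpret prob_space "PiM I M" by (rule prob_space_PiM[OF P])
  have "indep_vars M (\<lambda>i x. x i) J"
    using J by (intro indep_vars_subset[OF indep_vars_PiM_components[OF _ P]]) auto
  then have "indep_vars (\<lambda>_. borel) (\<lambda>i x. g i (x i)) J"
    by (rule indep_vars_compose2) (use g in auto)
  moreover have "AE x in PiM I M. g i (x i) \<in> {a..b}" if "i \<in> J" for i
    using AE_PiM_component[of I M, OF P _ ab[OF that]] that J by auto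
  ultimately interpret Hoeffding_ineq "PiM I M" J "\<lambda>i x. g i (x i)" "\<lambda>_. a" "\<lambda>_. b"
      "\<Sum>i\<in>J. expectation (\<lambda>x. g i (x i))"
    using J by unfold_locales auto
  have "(\<Sum>i\<in>J. (b - a)\<^sup>2) > 0"
    using J \<open>a < b\<close> by (intro sum_pos) auto
  moreover have "(\<Sum>i\<in>J. expectation (\<lambda>x. g i (x i))) = (\<Sum>i\<in>J. integral\<^sup>L (M i) (g i))"
    using g J by (intro sum.cong refl integral_PiM_component[OF P]) auto
  ultimately show ?thesis
    using Hoeffding_ineq_abs_ge[OF \<open>0 \<le> \<epsilon>\<close>] by simp
qed

section \<open>Measurability of the statistic\<close>

definition upper_pairs :: "nat \<Rightarrow> (nat \<times> nat) set" where
  "upper_pairs n = {(i, j). i < j \<and> j < n}"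

definition graph_space :: "nat \<Rightarrow> (nat \<times> nat \<Rightarrow> bool) measure" where
  "graph_space n = PiM (upper_pairs n) (\<lambda>_. count_space UNIV)"

lemma finite_upper_pairs: "finite (upper_pairs n)"
  by (rule finite_subset[of _ "{..<n} \<times> {..<n}"]) (auto simp: upper_pairs_def)

definition matrix_measurable :: "'a measure \<Rightarrow> nat \<Rightarrow> nat \<Rightarrow> ('a \<Rightarrow> nat \<Rightarrow> nat \<Rightarrow> real) \<Rightarrow> bool" where
  "matrix_measurable M r c A \<longleftrightarrow> (\<forall>i<r. \<forall>j<c. (\<lambda>x. A x i j) \<in> borel_measurable M)"

lemma matrix_measurable_mmul:
  "matrix_measurable M r m A \<Longrightarrow> matrix_measurable M m c B \<Longrightarrow> matrix_measurable M r c (\<lambda>x. mmul m (A x) (B x))"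
  unfolding matrix_measurable_def mmul_def by (auto intro!: borel_measurable_sum borel_measurable_times)

lemma matrix_measurable_const: "matrix_measurable M r c (\<lambda>x. A)"
  by (simp add: matrix_measurable_def)

lemma matrix_measurable_mpow: "matrix_measurable M n n A \<Longrightarrow> matrix_measurable M n n (\<lambda>x. mpow n (A x) k)"
  by (induction k) (simp_all add: matrix_measurable_mmul matrix_measurable_const)

lemma matrix_measurable_poly_mat:
  "matrix_measurable M n n A \<Longrightarrow> matrix_measurable M n n (\<lambda>x. poly_mat n f (A x))"
proof -
  assume A: "matrix_measurable M n n A"
  have "(\<lambda>x. mpow n (A x) k i j) \<in> borel_measurable M" if "i < n" "j < n" for i j k
    using matrix_measurable_mpow[OF A, of k] that by (simp add: matrix_measurable_def)
  then show ?thesis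
    unfolding poly_mat_def matrix_measurable_def by (auto intro!: borel_measurable_sum borel_measurable_times)
qed

lemma matrix_measurable_transpose:
  "matrix_measurable M r c A \<Longrightarrow> matrix_measurable M c r (\<lambda>x. mtranspose (A x))"
  by (simp add: matrix_measurable_def mtranspose_def)

lemma borel_measurable_mtrace:
  "matrix_measurable M n n A \<Longrightarrow> (\<lambda>x. mtrace n (A x)) \<in> borel_measurable M"
  unfolding mtrace_def matrix_measurable_def by (auto intro!: borel_measurable_sum)

lemma borel_measurable_adj: "i < n \<Longrightarrow> j < n \<Longrightarrow> (\<lambda>G. adj G i j) \<in> borel_measurable (graph_space n)"
proof -
  assume ij: "i < n" "j < n"
  have "(\<lambda>G. if G p then 1 else (0::real)) \<in> borel_measurable (graph_space n)" if "p \<in> upper_pairs n" for p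
    using that unfolding graph_space_def by measurable
  then show ?thesis
    unfolding adj_def using ij by (cases "i < j"; cases "j < i") (auto simp: upper_pairs_def)
qed

lemma borel_measurable_vertex_degree:
  "i < n \<Longrightarrow> (\<lambda>G. vertex_degree n G i) \<in> borel_measurable (graph_space n)"
  unfolding vertex_degree_def by (auto intro!: borel_measurable_sum borel_measurable_adj)

lemma matrix_measurable_norm_lap:
  assumes "\<pi> \<in> measurable M (graph_space n)"
  shows "matrix_measurable M n n (\<lambda>x. norm_lap n (\<pi> x))"
  unfolding matrix_measurable_def norm_lap_def
  using measurable_compose[OF assms borel_measurable_adj]
  by (auto intro!: borel_measurable_sum borel_measurable_divide borel_measurable_diff)

lemma borel_measurable_mtrace_energy_mat:
  "(\<lambda>G. mtrace n (energy_mat n f G)) \<in> borel_measurable (graph_space n)"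
  unfolding energy_mat_def
  by (intro borel_measurable_mtrace matrix_measurable_mmul matrix_measurable_transpose
      matrix_measurable_poly_mat matrix_measurable_norm_lap measurable_ident_sets refl)

lemma borel_measurable_h_stat:
  "(\<lambda>x. h_stat n d f (fst x) (snd x)) \<in> borel_measurable (graph_space n \<Otimes>\<^sub>M gauss_law n d)"
proof -
  let ?M = "graph_space n \<Otimes>\<^sub>M gauss_law n d"
  have L: "matrix_measurable ?M n n (\<lambda>x. norm_lap n (fst x))"
    by (rule matrix_measurable_norm_lap) simp
  have "(\<lambda>x. snd x (i, k)) \<in> borel_measurable ?M" if "i < n" "k < d" for i k
    using that by (intro measurable_compose[OF measurable_snd]) (simp add: gauss_law_def)
  then have "matrix_measurable ?M n d (\<lambda>x. gauss_init d (snd x))"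
    by (simp add: matrix_measurable_def gauss_init_def)
  then have X: "matrix_measurable ?M n d (\<lambda>x. mmul n (poly_mat n f (norm_lap n (fst x))) (gauss_init d (snd x)))"
    by (intro matrix_measurable_mmul matrix_measurable_poly_mat L)
  have "matrix_measurable ?M n n (\<lambda>x. mmul n (norm_lap n (fst x))
      (mmul d (mmul n (poly_mat n f (norm_lap n (fst x))) (gauss_init d (snd x)))
        (mtranspose (mmul n (poly_mat n f (norm_lap n (fst x))) (gauss_init d (snd x))))))"
    by (rule matrix_measurable_mmul[OF L matrix_measurable_mmul[OF X matrix_measurable_transpose[OF X]]])
  from borel_measurable_mtrace[OF this] show ?thesis
    unfolding h_stat_def Let_def by simp
qed

section \<open>Sampling a graph from a graphon\<close>

abbreviation unif01 :: "real measure" where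
  "unif01 \<equiv> uniform_measure lborel {0..1}"

definition latent_law :: "nat \<Rightarrow> (nat \<Rightarrow> real) measure" where
  "latent_law n = PiM {..<n} (\<lambda>_. unif01)"

definition edge_law :: "(real \<Rightarrow> real \<Rightarrow> real) \<Rightarrow> nat \<Rightarrow> (nat \<Rightarrow> real) \<Rightarrow> (nat \<times> nat \<Rightarrow> bool) measure" where
  "edge_law W n u = PiM (upper_pairs n) (\<lambda>p. measure_pmf (bernoulli_pmf (W (u (fst p)) (u (snd p)))))"

lemma graphon_law_eq_bind: "graphon_law W n = bind (latent_law n) (edge_law W n)"
  unfolding graphon_law_def latent_law_def edge_law_def upper_pairs_def by simp

lemma sets_edge_law: "sets (edge_law W n u) = sets (graph_space n)"
  unfolding edge_law_def graph_space_def by (intro sets_PiM_cong) auto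

lemma prob_space_edge_law: "prob_space (edge_law W n u)"
  unfolding edge_law_def by (intro prob_space_PiM measure_pmf.prob_space_axioms)

lemma prob_space_unif01: "prob_space unif01"
  by (intro prob_space_uniform_measure) auto

lemma prob_space_latent_law: "prob_space (latent_law n)"
  unfolding latent_law_def by (intro prob_space_PiM prob_space_unif01)

lemma sets_graphon_law: "sets (graphon_law W n) = sets (graph_space n)"
  unfolding graphon_law_eq_bind
  by (rule sets_bind[OF sets_edge_law prob_space.not_empty[OF prob_space_latent_law]])

text \<open>No measurability of \<open>W\<close> off the unit square is assumed, so the kernel \<open>edge_law\<close>
  may fail to be measurable; \<open>bind\<close> then returns the zero measure and the bound holds trivially.\<close>

lemma emeasure_graphon_law_le:
  assumes A: "A \<in> sets (graph_space n)"
  shows "emeasure (graphon_law W n) A \<le> (\<integral>\<^sup>+u. emeasure (edge_law W n u) A \<partial>latent_law n)"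
proof (cases "edge_law W n \<in> measurable (latent_law n) (subprob_algebra (graph_space n))")
  case True
  then show ?thesis
    unfolding graphon_law_eq_bind
    by (subst emeasure_bind[OF prob_space.not_empty[OF prob_space_latent_law] True A]) simp
next
  case False
  have "emeasure (graphon_law W n) A = 0"
    unfolding graphon_law_eq_bind
    using prob_space.emeasure_space_1[OF prob_space_latent_law]
    by (intro emeasure_bind_nonmeasurable[OF prob_space.not_empty[OF prob_space_latent_law] sets_edge_law
          prob_space_imp_subprob_space[OF prob_space_edge_law] _ False]) auto
  then show ?thesis by simp
qed

lemma integral_unif01:
  fixes g :: "real \<Rightarrow> real"
  assumes "g \<in> borel_measurable borel"
  shows "integral\<^sup>L unif01 g = (LBINT x=0..1. g x)"
proof -
  have "unif01 = density lborel (\<lambda>x. ennreal (indicator {0..1::real} x))"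
    unfolding uniform_measure_def by (auto intro!: density_cong simp: indicator_def)
  then have "integral\<^sup>L unif01 g = (\<integral>x. indicator {0..1::real} x *\<^sub>R g x \<partial>lborel)"
    using assms by (simp add: integral_density)
  also have "\<dots> = (LBINT x:{0..1}. g x)"
    by (simp add: set_lebesgue_integral_def)
  also have "\<dots> = (LBINT x=0..1. g x)"
    using interval_integral_Icc[of 0 1 g] by (simp add: zero_ereal_def one_ereal_def)
  finally show ?thesis .
qed

lemma AE_latent_law: "AE u in latent_law n. \<forall>i<n. u i \<in> {0..1}"
proof -
  have "AE u in latent_law n. u i \<in> {0..1}" if "i < n" for i
    unfolding latent_law_def using that
    by (intro AE_PiM_component[of "{..<n}" "\<lambda>_. unif01"] prob_space_unif01 AE_uniform_measureI) auto
  then show ?thesis by (subst AE_all_countable) (auto intro: AE_mp)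
qed

lemma borel_measurable_latent_component: "l < n \<Longrightarrow> (\<lambda>u. u l) \<in> borel_measurable (latent_law n)"
  unfolding latent_law_def by (simp add: measurable_cong_sets[OF refl sets_uniform_measure[symmetric]])

definition incident_pairs :: "nat \<Rightarrow> nat \<Rightarrow> (nat \<times> nat) set" where
  "incident_pairs n i = (\<lambda>l. (min i l, max i l)) ` ({..<n} - {i})"

lemma inj_on_incident_pair: "inj_on (\<lambda>l. (min i l, max i l)) ({..<n} - {i})"
  by (auto simp: inj_on_def min_def max_def split: if_splits)

lemma incident_pairs_subset: "i < n \<Longrightarrow> incident_pairs n i \<subseteq> upper_pairs n"
  by (auto simp: incident_pairs_def upper_pairs_def min_def max_def)

lemma card_incident_pairs: "i < n \<Longrightarrow> card (incident_pairs n i) = n - 1"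
  unfolding incident_pairs_def by (simp add: card_image[OF inj_on_incident_pair])

lemma vertex_degree_eq_sum_incident_pairs:
  assumes "i < n"
  shows "vertex_degree n G i = (\<Sum>p\<in>incident_pairs n i. if G p then 1 else 0)"
proof -
  have "vertex_degree n G i = (\<Sum>l\<in>{..<n} - {i}. adj G i l)"
    unfolding vertex_degree_def using assms by (subst sum.remove[of _ i]) auto
  also have "\<dots> = (\<Sum>l\<in>{..<n} - {i}. if G (min i l, max i l) then 1 else 0)"
    by (intro sum.cong refl) (auto simp: adj_def min_def max_def)
  finally show ?thesis
    unfolding incident_pairs_def by (simp add: sum.reindex[OF inj_on_incident_pair] o_def)
qed

lemma vertex_degree_deviation:
  assumes W01: "\<And>x y. x \<in> {0..1} \<Longrightarrow> y \<in> {0..1} \<Longrightarrow> W x y \<in> {0..1}"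
    and W_sym: "\<And>x y. x \<in> {0..1} \<Longrightarrow> y \<in> {0..1} \<Longrightarrow> W x y = W y x"
    and u: "\<And>l. l < n \<Longrightarrow> u l \<in> {0..1}" and "2 \<le> n" "i < n" "0 \<le> \<epsilon>"
  shows "measure (edge_law W n u) {G \<in> space (edge_law W n u).
           \<epsilon> \<le> \<bar>vertex_degree n G i - (\<Sum>l\<in>{..<n} - {i}. W (u i) (u l))\<bar>}
         \<le> 2 * exp (- 2 * \<epsilon>\<^sup>2 / real (n - 1))"
proof -
  let ?M = "\<lambda>p. measure_pmf (bernoulli_pmf (W (u (fst p)) (u (snd p))))"
  let ?g = "\<lambda>b. if b then 1 else (0::real)"
  have "(if i = 0 then 1 else 0) \<in> {..<n} - {i}"
    using \<open>2 \<le> n\<close> \<open>i < n\<close> by auto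
  then have ne: "incident_pairs n i \<noteq> {}"
    by (auto simp: incident_pairs_def)
  have "(\<Sum>p\<in>incident_pairs n i. integral\<^sup>L (?M p) ?g) = (\<Sum>p\<in>incident_pairs n i. W (u (fst p)) (u (snd p)))"
  proof (intro sum.cong refl)
    fix p assume "p \<in> incident_pairs n i"
    then have "W (u (fst p)) (u (snd p)) \<in> {0..1}"
      using incident_pairs_subset[OF \<open>i < n\<close>] by (intro W01 u) (auto simp: upper_pairs_def)
    then show "integral\<^sup>L (?M p) ?g = W (u (fst p)) (u (snd p))" by simp
  qed
  also have "\<dots> = (\<Sum>l\<in>{..<n} - {i}. W (u (min i l)) (u (max i l)))"
    unfolding incident_pairs_def by (simp add: sum.reindex[OF inj_on_incident_pair])
  also have "\<dots> = (\<Sum>l\<in>{..<n} - {i}. W (u i) (u l))"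
    using \<open>i < n\<close> u by (intro sum.cong refl) (auto simp: min_def max_def intro: W_sym)
  finally have mean: "(\<Sum>p\<in>incident_pairs n i. integral\<^sup>L (?M p) ?g) = (\<Sum>l\<in>{..<n} - {i}. W (u i) (u l))" .
  have "measure (PiM (upper_pairs n) ?M) {x \<in> space (PiM (upper_pairs n) ?M).
      \<epsilon> \<le> \<bar>(\<Sum>p\<in>incident_pairs n i. ?g (x p)) - (\<Sum>p\<in>incident_pairs n i. integral\<^sup>L (?M p) ?g)\<bar>}
      \<le> 2 * exp (- 2 * \<epsilon>\<^sup>2 / (real (card (incident_pairs n i)) * (1 - 0)\<^sup>2))"
    using incident_pairs_subset[OF \<open>i < n\<close>] ne \<open>0 \<le> \<epsilon>\<close>
    by (intro Hoeffding_PiM_components finite_subset[OF _ finite_upper_pairs])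
       (auto intro: measure_pmf.prob_space_axioms)
  then show ?thesis
    unfolding mean edge_law_def[symmetric] card_incident_pairs[OF \<open>i < n\<close>]
    by (simp add: vertex_degree_eq_sum_incident_pairs[OF \<open>i < n\<close>])
qed

lemma latent_sum_deviation:
  fixes g :: "real \<Rightarrow> real"
  assumes g: "g \<in> borel_measurable borel" and gb: "\<And>x. x \<in> {0..1} \<Longrightarrow> g x \<in> {a..b}"
    and "a < b" "1 \<le> n" "0 \<le> \<epsilon>"
  shows "measure (latent_law n) {u \<in> space (latent_law n). \<epsilon> \<le> \<bar>(\<Sum>l<n. g (u l)) - real n * (LBINT x=0..1. g x)\<bar>}
           \<le> 2 * exp (- 2 * \<epsilon>\<^sup>2 / (real n * (b - a)\<^sup>2))"
proof -
  have "AE x in unif01. g x \<in> {a..b}"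
    using gb by (intro AE_uniform_measureI) auto
  then have "measure (PiM {..<n} (\<lambda>_. unif01)) {x \<in> space (PiM {..<n} (\<lambda>_. unif01)).
      \<epsilon> \<le> \<bar>(\<Sum>l<n. g (x l)) - (\<Sum>l<n. integral\<^sup>L unif01 g)\<bar>}
      \<le> 2 * exp (- 2 * \<epsilon>\<^sup>2 / (real (card {..<n}) * (b - a)\<^sup>2))"
    using g assms by (intro Hoeffding_PiM_components prob_space_unif01) (auto simp: lessThan_empty_iff)
  then show ?thesis
    unfolding latent_law_def[symmetric] integral_unif01[OF g] by simp
qed

lemma sets_sample_law: "sets (sample_law W n d) = sets (graph_space n \<Otimes>\<^sub>M gauss_law n d)"
  unfolding sample_law_def by (rule sets_pair_measure_cong[OF sets_graphon_law refl])

lemma borel_measurable_h_stat_sample_law: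
  "(\<lambda>x. h_stat n d f (fst x) (snd x)) \<in> borel_measurable (sample_law W n d)"
  using borel_measurable_h_stat by (simp add: measurable_cong_sets[OF sets_sample_law refl])

lemma prob_space_graphon_law_if_sample_law:
  assumes "prob_space (sample_law W n d)"
  shows "prob_space (graphon_law W n)"
proof
  interpret gauss: prob_space "gauss_law n d" by (rule prob_space_gauss_law)
  have "emeasure (sample_law W n d) (space (graphon_law W n) \<times> space (gauss_law n d))
      = emeasure (graphon_law W n) (space (graphon_law W n))"
    unfolding sample_law_def by (subst gauss.emeasure_pair_measure_Times) (auto simp: gauss.emeasure_space_1)
  then show "emeasure (graphon_law W n) (space (graphon_law W n)) = 1"
    using prob_space.emeasure_space_1[OF assms] by (simp add: sample_law_def space_pair_measure)
qed

lemma space_sample_law: "space (sample_law W n d) = space (graph_space n) \<times> space (gauss_law n d)"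
  using sets_eq_imp_space_eq[OF sets_graphon_law] by (simp add: sample_law_def space_pair_measure)

lemma measure_sample_law_Times:
  assumes "A \<in> sets (graph_space n)"
  shows "measure (sample_law W n d) (A \<times> space (gauss_law n d)) = measure (graphon_law W n) A"
proof -
  interpret gauss: prob_space "gauss_law n d" by (rule prob_space_gauss_law)
  show ?thesis
    using assms unfolding sample_law_def
    by (simp add: measure_def sets_graphon_law gauss.emeasure_pair_measure_Times gauss.emeasure_space_1)
qed

lemma measure_sample_law_gauss_deviation:
  assumes "0 < n" "0 < d" "0 < t" and P: "prob_space (sample_law W n d)"
  shows "measure (sample_law W n d) {x \<in> space (sample_law W n d).
           t \<le> \<bar>h_stat n d f (fst x) (snd x) - mtrace n (energy_mat n f (fst x)) / real n\<bar>}
         \<le> 2 * (energy_mat_bound f)\<^sup>2 / (t\<^sup>2 * real d * real n)"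
proof -
  interpret gauss: prob_space "gauss_law n d" by (rule prob_space_gauss_law)
  interpret sample: prob_space "sample_law W n d" by (rule P)
  interpret graphon: prob_space "graphon_law W n" by (rule prob_space_graphon_law_if_sample_law[OF P])
  let ?c = "2 * (energy_mat_bound f)\<^sup>2 / (t\<^sup>2 * real d * real n)"
  define E where "E = {x \<in> space (sample_law W n d). t \<le> \<bar>h_stat n d f (fst x) (snd x) - mtrace n (energy_mat n f (fst x)) / real n\<bar>}"
  have "(\<lambda>x. mtrace n (energy_mat n f (fst x)) / real n) \<in> borel_measurable (sample_law W n d)"
    using borel_measurable_mtrace_energy_mat by (simp add: measurable_cong_sets[OF sets_sample_law refl])
  then have E: "E \<in> sets (graphon_law W n \<Otimes>\<^sub>M gauss_law n d)"
    using borel_measurable_h_stat_sample_law unfolding E_def sample_law_def[symmetric] by measurable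
  have "emeasure (sample_law W n d) E = (\<integral>\<^sup>+G. emeasure (gauss_law n d) (Pair G -` E) \<partial>graphon_law W n)"
    unfolding sample_law_def by (rule gauss.emeasure_pair_measure_alt[OF E])
  also have "\<dots> \<le> (\<integral>\<^sup>+G. ennreal ?c \<partial>graphon_law W n)"
  proof (intro nn_integral_mono)
    fix G assume "G \<in> space (graphon_law W n)"
    then have "Pair G -` E = {z \<in> space (gauss_law n d). t \<le> \<bar>h_stat n d f G z - mtrace n (energy_mat n f G) / real n\<bar>}"
      by (auto simp: E_def space_sample_law sets_eq_imp_space_eq[OF sets_graphon_law])
    then show "emeasure (gauss_law n d) (Pair G -` E) \<le> ennreal ?c"
      using measure_gauss_h_stat_deviation[of n d t f G] assms
      by (simp add: gauss.emeasure_eq_measure ennreal_leI)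
  qed
  finally show ?thesis
    by (simp add: E_def sample.emeasure_eq_measure graphon.emeasure_space_1)
qed

section \<open>Summable deviations and almost sure convergence\<close>

lemma AE_tendsto_of_summable_deviations:
  fixes X :: "nat \<Rightarrow> 'a \<Rightarrow> real"
  assumes M: "prob_space M"
    and meas: "eventually (\<lambda>n. X n \<in> borel_measurable M) sequentially"
    and dev: "\<And>\<epsilon>. 0 < \<epsilon> \<Longrightarrow> summable (\<lambda>n. measure M {\<omega> \<in> space M. \<epsilon> \<le> \<bar>X n \<omega> - c\<bar>})"
  shows "AE \<omega> in M. (\<lambda>n. X n \<omega>) \<longlonglongrightarrow> c"
proof -
  interpret prob_space M by (rule M)
  have close: "AE \<omega> in M. eventually (\<lambda>n. \<bar>X n \<omega> - c\<bar> < \<epsilon>) sequentially" if "0 < \<epsilon>" for \<epsilon>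
  proof -
    define A where "A n = (if X n \<in> borel_measurable M then {\<omega> \<in> space M. \<epsilon> \<le> \<bar>X n \<omega> - c\<bar>} else {})" for n
    have A: "A n \<in> events" for n
      unfolding A_def by (cases "X n \<in> borel_measurable M") simp_all
    have "summable (\<lambda>n. measure M (A n))"
      by (rule summable_comparison_test[OF _ dev[OF that]]) (auto simp: A_def)
    then have "AE \<omega> in M. eventually (\<lambda>n. \<omega> \<in> space M - A n) sequentially"
      using A by (intro borel_cantelli_AE1) (auto simp: emeasure_eq_measure)
    then show ?thesis
    proof (rule AE_mp, intro AE_I2 impI)
      fix \<omega> assume \<omega>: "\<omega> \<in> space M" and ev: "eventually (\<lambda>n. \<omega> \<in> space M - A n) sequentially"
      show "eventually (\<lambda>n. \<bar>X n \<omega> - c\<bar> < \<epsilon>) sequentially"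
        using meas ev by eventually_elim (use \<omega> in \<open>auto simp: A_def not_le\<close>)
    qed
  qed
  have "AE \<omega> in M. \<forall>k. eventually (\<lambda>n. \<bar>X n \<omega> - c\<bar> < 1 / real (Suc k)) sequentially"
    by (subst AE_all_countable) (auto intro: close)
  then show ?thesis
  proof (rule AE_mp, intro AE_I2 impI tendstoI)
    fix \<omega> and e :: real
    assume ev: "\<forall>k. eventually (\<lambda>n. \<bar>X n \<omega> - c\<bar> < 1 / real (Suc k)) sequentially" and "0 < e"
    then obtain k where k: "1 / real (Suc k) < e"
      using nat_approx_posE by blast
    show "eventually (\<lambda>n. dist (X n \<omega>) c < e) sequentially"
      using ev[rule_format, of k] by eventually_elim (use k in \<open>simp add: dist_real_def\<close>)
  qed
qed

lemma summable_inverse_mult_if_powr_bounded: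
  fixes d :: "nat \<Rightarrow> nat" and \<alpha> c :: real
  assumes "1 < \<alpha>" and d_pos: "\<And>n. 1 \<le> n \<Longrightarrow> 0 < d n"
    and d_hi: "\<And>n. 1 \<le> n \<Longrightarrow> real n \<le> real (d n) powr \<alpha>"
  shows "summable (\<lambda>n. c / (real (d n) * real n))"
proof (rule summable_comparison_test_ev)
  show "summable (\<lambda>n. \<bar>c\<bar> * real n powr (- (1 + 1 / \<alpha>)))"
    using \<open>1 < \<alpha>\<close> by (intro summable_mult) (simp add: summable_real_powr_iff)
  show "eventually (\<lambda>n. norm (c / (real (d n) * real n)) \<le> \<bar>c\<bar> * real n powr (- (1 + 1 / \<alpha>))) sequentially"
    using eventually_ge_at_top[of 1]
  proof eventually_elim
    case (elim n)
    have d: "0 < real (d n)" using d_pos[OF elim] by simp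
    have "real n powr (1 / \<alpha>) \<le> (real (d n) powr \<alpha>) powr (1 / \<alpha>)"
      using d_hi[OF elim] \<open>1 < \<alpha>\<close> by (intro powr_mono2) auto
    also have "\<dots> = real (d n)"
      using d \<open>1 < \<alpha>\<close> by (simp add: powr_powr)
    finally have "real n powr (1 + 1 / \<alpha>) \<le> real (d n) * real n"
      using elim by (simp add: powr_add mult.commute mult_right_mono)
    have "norm (c / (real (d n) * real n)) = \<bar>c\<bar> / (real (d n) * real n)"
      by (simp add: abs_divide)
    also have "\<dots> \<le> \<bar>c\<bar> / real n powr (1 + 1 / \<alpha>)"
      using \<open>real n powr (1 + 1 / \<alpha>) \<le> real (d n) * real n\<close> elim d
      by (intro divide_left_mono) (auto intro!: mult_pos_pos)
    also have "\<dots> = \<bar>c\<bar> * real n powr (- (1 + 1 / \<alpha>))"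
      by (simp only: powr_minus divide_inverse)
    finally show ?case .
  qed
qed

lemma summable_linear_times_exp:
  fixes a b c :: real
  assumes "0 < c"
  shows "summable (\<lambda>n. (a * real n + b) * exp (- c * real n))"
proof (rule summable_comparison_test_bigo)
  show "summable (\<lambda>n. norm (real n powr (-2)))"
    using summable_real_powr_iff[of "-2"] by simp
  show "(\<lambda>n. (a * real n + b) * exp (- c * real n)) \<in> O(\<lambda>n. real n powr (-2))"
    using assms by real_asymp
qed

lemma summable_measure_deviation_distr:
  fixes g :: "nat \<Rightarrow> 'b \<Rightarrow> real"
  assumes X: "\<And>n. N \<le> n \<Longrightarrow> X n \<in> measurable M (S n)" and law: "\<And>n. N \<le> n \<Longrightarrow> distr M (S n) (X n) = S n"
    and g: "\<And>n. g n \<in> borel_measurable (S n)"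
    and summable: "summable (\<lambda>n. measure (S n) {x \<in> space (S n). \<epsilon> \<le> \<bar>g n x - c\<bar>})"
  shows "summable (\<lambda>n. measure M {\<omega> \<in> space M. \<epsilon> \<le> \<bar>g n (X n \<omega>) - c\<bar>})"
proof -
  have eq: "measure (S n) {x \<in> space (S n). \<epsilon> \<le> \<bar>g n x - c\<bar>} = measure M {\<omega> \<in> space M. \<epsilon> \<le> \<bar>g n (X n \<omega>) - c\<bar>}"
    if n: "N \<le> n" for n
  proof -
    have "{x \<in> space (S n). \<epsilon> \<le> \<bar>g n x - c\<bar>} \<in> sets (S n)"
      using g[of n] by measurable
    then have "measure (S n) {x \<in> space (S n). \<epsilon> \<le> \<bar>g n x - c\<bar>}
        = measure M (X n -` {x \<in> space (S n). \<epsilon> \<le> \<bar>g n x - c\<bar>} \<inter> space M)"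
      by (subst (1) law[OF n, symmetric]) (rule measure_distr[OF X[OF n]])
    also have "X n -` {x \<in> space (S n). \<epsilon> \<le> \<bar>g n x - c\<bar>} \<inter> space M = {\<omega> \<in> space M. \<epsilon> \<le> \<bar>g n (X n \<omega>) - c\<bar>}"
      using measurable_space[OF X[OF n]] by auto
    finally show ?thesis .
  qed
  have "eventually (\<lambda>n. measure (S n) {x \<in> space (S n). \<epsilon> \<le> \<bar>g n x - c\<bar>}
      = measure M {\<omega> \<in> space M. \<epsilon> \<le> \<bar>g n (X n \<omega>) - c\<bar>}) sequentially"
    by (intro eventually_mono[OF eventually_ge_at_top[of N]] eq)
  then show ?thesis
    using summable by (simp add: summable_cong)
qed

section \<open>Lipschitz graphons\<close>

lemma grid_point_close:
  fixes K :: nat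
  assumes "1 \<le> K" and x: "x \<in> {0..1}"
  obtains m where "m \<le> K" "\<bar>x - real m / real K\<bar> \<le> 1 / real K"
proof
  define m where "m = nat \<lfloor>x * real K\<rfloor>"
  have fl: "real m \<le> x * real K" "x * real K < real m + 1"
    using x unfolding m_def by (auto simp: of_nat_nat)
  moreover have "x * real K \<le> real K"
    using x mult_right_mono[of x 1 "real K"] by simp
  ultimately have "real m \<le> real K" by linarith
  then show "m \<le> K" by simp
  have "x - real m / real K = (x * real K - real m) / real K"
    using assms by (simp add: field_simps)
  moreover have "0 \<le> (x * real K - real m) / real K" "(x * real K - real m) / real K \<le> 1 / real K"
    using fl by (auto intro: divide_right_mono)
  ultimately show "\<bar>x - real m / real K\<bar> \<le> 1 / real K" by simp
qed

definition clamp01 :: "real \<Rightarrow> real" where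
  "clamp01 x = max 0 (min 1 x)"

lemma clamp01_in: "clamp01 x \<in> {0..1}"
  and clamp01_id: "x \<in> {0..1} \<Longrightarrow> clamp01 x = x"
  and clamp01_dist: "\<bar>clamp01 x - clamp01 y\<bar> \<le> \<bar>x - y\<bar>"
  by (auto simp: clamp01_def)

lemma borel_measurable_lipschitz:
  fixes g :: "real \<Rightarrow> real"
  assumes "\<And>x y. \<bar>g x - g y\<bar> \<le> K * \<bar>x - y\<bar>"
  shows "g \<in> borel_measurable borel"
proof -
  have "0 \<le> K"
    using assms[of 1 0] by simp
  then have "K-lipschitz_on UNIV g"
    by (intro lipschitz_onI) (use assms in \<open>auto simp: dist_real_def\<close>)
  then show ?thesis
    by (intro borel_measurable_continuous_onI lipschitz_on_continuous_on)
qed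

locale lipschitz_graphon =
  fixes W :: "real \<Rightarrow> real \<Rightarrow> real" and L :: real
  assumes W_range: "\<And>x y. x \<in> {0..1} \<Longrightarrow> y \<in> {0..1} \<Longrightarrow> W x y \<in> {0..1}"
    and W_sym: "\<And>x y. x \<in> {0..1} \<Longrightarrow> y \<in> {0..1} \<Longrightarrow> W x y = W y x"
    and W_lipschitz: "\<And>x y x' y'. x \<in> {0..1} \<Longrightarrow> y \<in> {0..1} \<Longrightarrow> x' \<in> {0..1} \<Longrightarrow> y' \<in> {0..1} \<Longrightarrow>
                  \<bar>W x y - W x' y'\<bar> \<le> L * (\<bar>x - x'\<bar> + \<bar>y - y'\<bar>)"
begin

lemma lipschitz_const_nonneg: "0 \<le> L"
  using W_lipschitz[of 0 0 1 0] by auto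

text \<open>The latent variables live in all of \<open>\<real>\<close> (the uniform law only makes them a.s. lie in
  \<open>[0, 1]\<close>), so \<open>W\<close> is extended to the plane by clamping, which keeps it bounded and Lipschitz.\<close>

definition W_ext :: "real \<Rightarrow> real \<Rightarrow> real" where
  "W_ext x y = W (clamp01 x) (clamp01 y)"

lemma W_ext_range: "W_ext x y \<in> {0..1}"
  unfolding W_ext_def by (intro W_range clamp01_in)

lemma W_ext_eq: "x \<in> {0..1} \<Longrightarrow> y \<in> {0..1} \<Longrightarrow> W_ext x y = W x y"
  by (simp add: W_ext_def clamp01_id)

lemma W_ext_lipschitz: "\<bar>W_ext x y - W_ext x' y'\<bar> \<le> L * (\<bar>x - x'\<bar> + \<bar>y - y'\<bar>)"
proof -
  have "\<bar>W_ext x y - W_ext x' y'\<bar> \<le> L * (\<bar>clamp01 x - clamp01 x'\<bar> + \<bar>clamp01 y - clamp01 y'\<bar>)"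
    unfolding W_ext_def by (intro W_lipschitz clamp01_in)
  also have "\<dots> \<le> L * (\<bar>x - x'\<bar> + \<bar>y - y'\<bar>)"
    using lipschitz_const_nonneg clamp01_dist[of x x'] clamp01_dist[of y y'] by (intro mult_left_mono) auto
  finally show ?thesis .
qed

lemma borel_measurable_W_ext: "W_ext x \<in> borel_measurable borel"
  using W_ext_lipschitz[of x _ x] by (intro borel_measurable_lipschitz[of _ L]) simp

lemma integrable_W_ext: "integrable unif01 (W_ext x)"
proof -
  interpret prob_space unif01 by (rule prob_space_unif01)
  show ?thesis
    by (rule integrable_const_bound[where B=1]) (use W_ext_range borel_measurable_W_ext in auto)
qed

definition degree_fun :: "real \<Rightarrow> real" where
  "degree_fun x = integral\<^sup>L unif01 (W_ext x)"

lemma degree_fun_range: "degree_fun x \<in> {0..1}"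
proof -
  interpret prob_space unif01 by (rule prob_space_unif01)
  have "0 \<le> degree_fun x"
    unfolding degree_fun_def by (rule integral_nonneg_AE) (use W_ext_range in auto)
  moreover have "degree_fun x \<le> integral\<^sup>L unif01 (\<lambda>_. 1)"
    unfolding degree_fun_def by (rule integral_mono[OF integrable_W_ext]) (use W_ext_range in auto)
  ultimately show ?thesis by simp
qed

lemma degree_fun_lipschitz: "\<bar>degree_fun x - degree_fun x'\<bar> \<le> L * \<bar>x - x'\<bar>"
proof -
  interpret prob_space unif01 by (rule prob_space_unif01)
  have "\<bar>degree_fun x - degree_fun x'\<bar> = \<bar>integral\<^sup>L unif01 (\<lambda>y. W_ext x y - W_ext x' y)\<bar>"
    unfolding degree_fun_def by (simp add: integrable_W_ext)
  also have "\<dots> \<le> integral\<^sup>L unif01 (\<lambda>y. \<bar>W_ext x y - W_ext x' y\<bar>)"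
    by (rule integral_abs_bound[simplified real_norm_def])
  also have "\<dots> \<le> integral\<^sup>L unif01 (\<lambda>y. L * \<bar>x - x'\<bar>)"
  proof (rule integral_mono)
    show "integrable unif01 (\<lambda>y. \<bar>W_ext x y - W_ext x' y\<bar>)"
      using integrable_W_ext by auto
    show "\<bar>W_ext x y - W_ext x' y\<bar> \<le> L * \<bar>x - x'\<bar>" for y
      using W_ext_lipschitz[of x y x' y] by simp
  qed simp
  finally show ?thesis by simp
qed

lemma borel_measurable_degree_fun: "degree_fun \<in> borel_measurable borel"
  by (rule borel_measurable_lipschitz[OF degree_fun_lipschitz])

lemma graphon_degree_eq_degree_fun: "x \<in> {0..1} \<Longrightarrow> graphon_degree W x = degree_fun x"
  unfolding degree_fun_def integral_unif01[OF borel_measurable_W_ext] graphon_degree_def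
  by (intro interval_integral_cong) (auto simp: W_ext_eq einterval_iff zero_ereal_def one_ereal_def)

definition limit_const :: "real poly \<Rightarrow> real" where
  "limit_const f = (LBINT x=0..1. energy f (degree_fun x))"

lemma limit_const_eq:
  "limit_const f = (LBINT x=0..1. graphon_degree W x * (poly f (graphon_degree W x))\<^sup>2)"
  unfolding limit_const_def energy_def
  by (intro interval_integral_cong) (auto simp: graphon_degree_eq_degree_fun einterval_iff zero_ereal_def one_ereal_def)

text \<open>Uniform concentration of \<open>x \<mapsto> \<Sum>\<^sub>l W(x, u\<^sub>l)\<close> follows from concentration on the grid
  \<open>{m/K | m \<le> K}\<close> because both sides are \<open>L\<close>-Lipschitz in \<open>x\<close>.\<close>

lemma sum_W_ext_approx_from_grid:
  fixes K :: nat
  assumes K: "1 \<le> K" and x: "x \<in> {0..1}"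
    and grid: "\<And>m. m \<le> K \<Longrightarrow> \<bar>(\<Sum>l<n. W_ext (real m / real K) (u l)) - real n * degree_fun (real m / real K)\<bar> < real n * \<tau>"
  shows "\<bar>(\<Sum>l<n. W_ext x (u l)) - real n * degree_fun x\<bar> < real n * (\<tau> + 2 * L / real K)"
proof -
  obtain m where "m \<le> K" "\<bar>x - real m / real K\<bar> \<le> 1 / real K"
    using grid_point_close[OF K x] by blast
  then have close: "L * \<bar>x - real m / real K\<bar> \<le> L / real K"
    using lipschitz_const_nonneg mult_left_mono by fastforce
  have "\<bar>W_ext x y - W_ext (real m / real K) y\<bar> \<le> L / real K" for y
    using W_ext_lipschitz[of x y "real m / real K" y] close by simp
  then have "\<bar>(\<Sum>l<n. W_ext x (u l)) - (\<Sum>l<n. W_ext (real m / real K) (u l))\<bar> \<le> (\<Sum>l<n. L / real K)"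
    unfolding sum_subtractf[symmetric] by (intro order.trans[OF sum_abs] sum_mono)
  moreover have "\<bar>degree_fun (real m / real K) - degree_fun x\<bar> \<le> L / real K"
    using degree_fun_lipschitz[of x "real m / real K"] close by (simp add: abs_minus_commute)
  then have "\<bar>real n * degree_fun (real m / real K) - real n * degree_fun x\<bar> \<le> real n * (L / real K)"
    unfolding right_diff_distrib[symmetric] abs_mult abs_of_nat by (intro mult_left_mono) auto
  moreover have "real n * (\<tau> + 2 * L / real K) = real n * \<tau> + real n * (L / real K) + real n * (L / real K)"
    by (simp add: algebra_simps)
  ultimately show ?thesis
    using grid[OF \<open>m \<le> K\<close>] unfolding abs_le_iff abs_less_iff by (simp only: sum_constant card_lessThan) (safe; linarith)
qed

lemma scaled_vertex_degree_approx:
  fixes K :: nat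
  assumes n: "1 \<le> n" and K: "1 \<le> K" and u: "\<And>l. l < n \<Longrightarrow> u l \<in> {0..1}"
    and grid: "\<And>m. m \<le> K \<Longrightarrow> \<bar>(\<Sum>l<n. W_ext (real m / real K) (u l)) - real n * degree_fun (real m / real K)\<bar> < real n * \<tau>"
    and i: "i < n" and deg: "\<bar>vertex_degree n G i - (\<Sum>l\<in>{..<n} - {i}. W (u i) (u l))\<bar> < real n * \<tau>"
  shows "\<bar>vertex_degree n G i / real n - degree_fun (u i)\<bar> \<le> 2 * \<tau> + 1 / real n + 2 * L / real K"
proof -
  have "(\<Sum>l<n. W_ext (u i) (u l)) = W_ext (u i) (u i) + (\<Sum>l\<in>{..<n} - {i}. W (u i) (u l))"
    using i u by (simp add: sum.remove[of _ i] W_ext_eq)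
  then have "\<bar>vertex_degree n G i - real n * degree_fun (u i)\<bar> \<le> real n * (\<tau> + 2 * L / real K) + 1 + real n * \<tau>"
    using sum_W_ext_approx_from_grid[OF K u[OF i] grid] deg W_ext_range[of "u i" "u i"]
    unfolding abs_le_iff abs_less_iff atLeastAtMost_iff by linarith
  then have "\<bar>vertex_degree n G i - real n * degree_fun (u i)\<bar> / real n \<le> (real n * (\<tau> + 2 * L / real K) + 1 + real n * \<tau>) / real n"
    by (rule divide_right_mono) simp
  then show ?thesis
    using n by (simp add: field_simps)
qed

lemma energy_trace_approx:
  fixes K :: nat
  assumes n: "1 \<le> n" and K: "1 \<le> K" and u: "\<And>l. l < n \<Longrightarrow> u l \<in> {0..1}"
    and grid: "\<And>m. m \<le> K \<Longrightarrow> \<bar>(\<Sum>l<n. W_ext (real m / real K) (u l)) - real n * degree_fun (real m / real K)\<bar> < real n * \<tau>"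
    and latent: "\<bar>(\<Sum>l<n. energy f (degree_fun (u l))) - real n * limit_const f\<bar> < real n * \<tau>'"
    and deg: "\<And>i. i < n \<Longrightarrow> \<bar>vertex_degree n G i - (\<Sum>l\<in>{..<n} - {i}. W (u i) (u l))\<bar> < real n * \<tau>"
  shows "\<bar>mtrace n (energy_mat n f G) / real n - limit_const f\<bar>
    < trace_approx_const f / real n + energy_lipschitz_const f * (2 * \<tau> + 1 / real n + 2 * L / real K) + \<tau>'"
proof -
  define \<rho> where "\<rho> = 2 * \<tau> + 1 / real n + 2 * L / real K"
  have "\<bar>energy f (vertex_degree n G i / real n) - energy f (degree_fun (u i))\<bar> \<le> energy_lipschitz_const f * \<rho>"
    if i: "i < n" for i
  proof -
    have "vertex_degree n G i / real n \<in> {0..1}"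
      using n by (intro scaled_vertex_degree_01) auto
    then have "\<bar>energy f (vertex_degree n G i / real n) - energy f (degree_fun (u i))\<bar>
        \<le> energy_lipschitz_const f * \<bar>vertex_degree n G i / real n - degree_fun (u i)\<bar>"
      by (rule energy_lipschitz[OF _ degree_fun_range])
    also have "\<dots> \<le> energy_lipschitz_const f * \<rho>"
      unfolding \<rho>_def using scaled_vertex_degree_approx[OF n K u grid i deg[OF i]]
      by (intro mult_left_mono energy_lipschitz_const_nonneg)
    finally show ?thesis .
  qed
  then have "\<bar>(\<Sum>i<n. energy f (vertex_degree n G i / real n)) - (\<Sum>i<n. energy f (degree_fun (u i)))\<bar>
      \<le> real n * (energy_lipschitz_const f * \<rho>)"
    unfolding sum_subtractf[symmetric]
    using sum_mono[of "{..<n}" _ "\<lambda>_. energy_lipschitz_const f * \<rho>"]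
    by (intro order.trans[OF sum_abs]) auto
  then have "\<bar>mtrace n (energy_mat n f G) - real n * limit_const f\<bar>
      < trace_approx_const f + real n * (energy_lipschitz_const f * \<rho>) + real n * \<tau>'"
    using mtrace_energy_mat_approx[of n f G] latent by (simp add: abs_le_iff abs_less_iff)
  then have "\<bar>mtrace n (energy_mat n f G) - real n * limit_const f\<bar> / real n
      < (trace_approx_const f + real n * (energy_lipschitz_const f * \<rho>) + real n * \<tau>') / real n"
    using n by (intro divide_strict_right_mono) auto
  moreover have "\<bar>mtrace n (energy_mat n f G) - real n * limit_const f\<bar> / real n
      = \<bar>mtrace n (energy_mat n f G) / real n - limit_const f\<bar>"
    using n by (simp add: field_simps)
  moreover have "(trace_approx_const f + real n * (energy_lipschitz_const f * \<rho>) + real n * \<tau>') / real n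
      = trace_approx_const f / real n + energy_lipschitz_const f * \<rho> + \<tau>'"
    using n by (simp add: field_simps)
  ultimately show ?thesis by (simp add: \<rho>_def)
qed

lemma measure_edge_law_degree_deviation:
  assumes n: "2 \<le> n" and u: "\<And>l. l < n \<Longrightarrow> u l \<in> {0..1}" and "0 < \<tau>"
  shows "{G \<in> space (edge_law W n u).
           \<exists>i<n. real n * \<tau> \<le> \<bar>vertex_degree n G i - (\<Sum>l\<in>{..<n} - {i}. W (u i) (u l))\<bar>} \<in> sets (edge_law W n u)"
    and "measure (edge_law W n u) {G \<in> space (edge_law W n u).
           \<exists>i<n. real n * \<tau> \<le> \<bar>vertex_degree n G i - (\<Sum>l\<in>{..<n} - {i}. W (u i) (u l))\<bar>}
         \<le> real n * (2 * exp (- 2 * real n * \<tau>\<^sup>2))"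
proof -
  interpret prob_space "edge_law W n u" by (rule prob_space_edge_law)
  define D where "D i = {G \<in> space (edge_law W n u). real n * \<tau> \<le> \<bar>vertex_degree n G i - (\<Sum>l\<in>{..<n} - {i}. W (u i) (u l))\<bar>}" for i
  have events: "D i \<in> events" if "i < n" for i
  proof -
    have "(\<lambda>G. vertex_degree n G i) \<in> borel_measurable (edge_law W n u)"
      using borel_measurable_vertex_degree[OF that] by (simp add: measurable_cong_sets[OF sets_edge_law refl])
    then show ?thesis
      unfolding D_def by measurable
  qed
  then have "prob (\<Union>i<n. D i) \<le> (\<Sum>i<n. prob (D i))"
    by (intro finite_measure_subadditive_finite) auto
  also have "\<dots> \<le> (\<Sum>i<n. 2 * exp (- 2 * real n * \<tau>\<^sup>2))"
  proof (intro sum_mono)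
    fix i assume "i \<in> {..<n}"
    then have "prob (D i) \<le> 2 * exp (- 2 * (real n * \<tau>)\<^sup>2 / real (n - 1))"
      unfolding D_def using n u \<open>0 < \<tau>\<close> by (intro vertex_degree_deviation W_range W_sym) auto
    also have "\<dots> \<le> 2 * exp (- 2 * real n * \<tau>\<^sup>2)"
      using n \<open>0 < \<tau>\<close> by (auto simp: power2_eq_square field_simps intro!: mult_left_mono)
    finally show "prob (D i) \<le> 2 * exp (- 2 * real n * \<tau>\<^sup>2)" .
  qed
  moreover have Dev_eq: "{G \<in> space (edge_law W n u). \<exists>i<n. real n * \<tau> \<le> \<bar>vertex_degree n G i - (\<Sum>l\<in>{..<n} - {i}. W (u i) (u l))\<bar>}
      = (\<Union>i<n. D i)"
    by (auto simp: D_def)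
  ultimately show "measure (edge_law W n u) {G \<in> space (edge_law W n u).
      \<exists>i<n. real n * \<tau> \<le> \<bar>vertex_degree n G i - (\<Sum>l\<in>{..<n} - {i}. W (u i) (u l))\<bar>}
    \<le> real n * (2 * exp (- 2 * real n * \<tau>\<^sup>2))" by simp
  show "{G \<in> space (edge_law W n u).
      \<exists>i<n. real n * \<tau> \<le> \<bar>vertex_degree n G i - (\<Sum>l\<in>{..<n} - {i}. W (u i) (u l))\<bar>} \<in> sets (edge_law W n u)"
    unfolding Dev_eq using events by auto
qed

definition latent_bad :: "real poly \<Rightarrow> nat \<Rightarrow> nat \<Rightarrow> real \<Rightarrow> real \<Rightarrow> (nat \<Rightarrow> real) set" where
  "latent_bad f n K \<tau> \<tau>' =
     {u \<in> space (latent_law n). real n * \<tau>' \<le> \<bar>(\<Sum>l<n. energy f (degree_fun (u l))) - real n * limit_const f\<bar>}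
     \<union> (\<Union>m\<le>K. {u \<in> space (latent_law n).
          real n * \<tau> \<le> \<bar>(\<Sum>l<n. W_ext (real m / real K) (u l)) - real n * degree_fun (real m / real K)\<bar>})"

lemma borel_measurable_latent_sums:
  "(\<lambda>u. \<Sum>l<n. energy f (degree_fun (u l))) \<in> borel_measurable (latent_law n)"
  "(\<lambda>u. \<Sum>l<n. W_ext x (u l)) \<in> borel_measurable (latent_law n)"
  using borel_measurable_latent_component
  by (auto intro!: borel_measurable_sum borel_measurable_energy measurable_compose[OF _ borel_measurable_degree_fun]
      measurable_compose[OF _ borel_measurable_W_ext])

lemma measure_latent_bad:
  assumes "1 \<le> n" "0 < \<tau>" "0 < \<tau>'"
  shows "latent_bad f n K \<tau> \<tau>' \<in> sets (latent_law n)"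
    and "measure (latent_law n) (latent_bad f n K \<tau> \<tau>')
      \<le> 2 * exp (- (\<tau>'\<^sup>2 / (2 * (energy_sup f)\<^sup>2)) * real n) + real (Suc K) * (2 * exp (- 2 * real n * \<tau>\<^sup>2))"
proof -
  interpret prob_space "latent_law n" by (rule prob_space_latent_law)
  define B where "B = {u \<in> space (latent_law n). real n * \<tau>' \<le> \<bar>(\<Sum>l<n. energy f (degree_fun (u l))) - real n * limit_const f\<bar>}"
  define B' where "B' x = {u \<in> space (latent_law n). real n * \<tau> \<le> \<bar>(\<Sum>l<n. W_ext x (u l)) - real n * degree_fun x\<bar>}" for x
  have events: "B \<in> events" "B' x \<in> events" for x
    unfolding B_def B'_def using borel_measurable_latent_sums by measurable
  have bad_eq: "latent_bad f n K \<tau> \<tau>' = B \<union> (\<Union>m\<le>K. B' (real m / real K))"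
    by (simp add: latent_bad_def B_def B'_def)
  then show "latent_bad f n K \<tau> \<tau>' \<in> sets (latent_law n)"
    using events by auto
  have "energy f (degree_fun x) \<in> {- energy_sup f..energy_sup f}" for x
    using abs_energy_le[OF degree_fun_range, of f x] unfolding abs_le_iff atLeastAtMost_iff by linarith
  then have "prob B \<le> 2 * exp (- 2 * (real n * \<tau>')\<^sup>2 / (real n * (energy_sup f - - energy_sup f)\<^sup>2))"
    unfolding B_def limit_const_def using energy_sup_ge_1[of f] assms
    by (intro latent_sum_deviation borel_measurable_energy borel_measurable_degree_fun) auto
  also have "\<dots> = 2 * exp (- (\<tau>'\<^sup>2 / (2 * (energy_sup f)\<^sup>2)) * real n)"
    using assms energy_sup_ge_1[of f] by (simp add: power2_eq_square field_simps)
  finally have latent: "prob B \<le> 2 * exp (- (\<tau>'\<^sup>2 / (2 * (energy_sup f)\<^sup>2)) * real n)" .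
  have B': "prob (B' x) \<le> 2 * exp (- 2 * real n * \<tau>\<^sup>2)" for x
  proof -
    have "prob {u \<in> space (latent_law n). real n * \<tau> \<le> \<bar>(\<Sum>l<n. W_ext x (u l)) - real n * (LBINT y=0..1. W_ext x y)\<bar>}
        \<le> 2 * exp (- 2 * (real n * \<tau>)\<^sup>2 / (real n * (1 - 0)\<^sup>2))"
      using W_ext_range assms by (intro latent_sum_deviation borel_measurable_W_ext) auto
    then show ?thesis
      using assms by (simp add: B'_def degree_fun_def integral_unif01[OF borel_measurable_W_ext] power2_eq_square mult_ac)
  qed
  have "prob (\<Union>m\<le>K. B' (real m / real K)) \<le> (\<Sum>m\<le>K. prob (B' (real m / real K)))"
    using events by (intro finite_measure_subadditive_finite) auto
  also have "\<dots> \<le> (\<Sum>m\<le>K. 2 * exp (- 2 * real n * \<tau>\<^sup>2))"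
    by (intro sum_mono B')
  finally have grid: "prob (\<Union>m\<le>K. B' (real m / real K)) \<le> real (Suc K) * (2 * exp (- 2 * real n * \<tau>\<^sup>2))"
    by simp
  show "prob (latent_bad f n K \<tau> \<tau>')
      \<le> 2 * exp (- (\<tau>'\<^sup>2 / (2 * (energy_sup f)\<^sup>2)) * real n) + real (Suc K) * (2 * exp (- 2 * real n * \<tau>\<^sup>2))"
    unfolding bad_eq using events by (intro order.trans[OF measure_subadditive] add_mono latent grid) (auto simp: emeasure_eq_measure)
qed

lemma emeasure_edge_law_energy_deviation:
  fixes K :: nat
  assumes n: "2 \<le> n" and K: "1 \<le> K" and "0 < \<tau>"
    and small: "trace_approx_const f / real n + energy_lipschitz_const f * (2 * \<tau> + 1 / real n + 2 * L / real K) + \<tau>' < t"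
    and u: "\<forall>l<n. u l \<in> {0..1}" "u \<in> space (latent_law n)"
  shows "emeasure (edge_law W n u) {G \<in> space (graph_space n). t \<le> \<bar>mtrace n (energy_mat n f G) / real n - limit_const f\<bar>}
    \<le> ennreal (real n * (2 * exp (- 2 * real n * \<tau>\<^sup>2))) + indicator (latent_bad f n K \<tau> \<tau>') u"
proof -
  interpret edge: prob_space "edge_law W n u" by (rule prob_space_edge_law)
  let ?A = "{G \<in> space (graph_space n). t \<le> \<bar>mtrace n (energy_mat n f G) / real n - limit_const f\<bar>}"
  let ?Dev = "{G \<in> space (edge_law W n u). \<exists>i<n. real n * \<tau> \<le> \<bar>vertex_degree n G i - (\<Sum>l\<in>{..<n} - {i}. W (u i) (u l))\<bar>}"
  show ?thesis
  proof (cases "u \<in> latent_bad f n K \<tau> \<tau>'")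
    case True
    then show ?thesis
      using edge.emeasure_le_1 by (simp add: add_increasing)
  next
    case False
    have "?A \<subseteq> ?Dev"
    proof
      fix G assume G: "G \<in> ?A"
      show "G \<in> ?Dev"
      proof (rule ccontr)
        assume "G \<notin> ?Dev"
        then have "\<bar>mtrace n (energy_mat n f G) / real n - limit_const f\<bar>
            < trace_approx_const f / real n + energy_lipschitz_const f * (2 * \<tau> + 1 / real n + 2 * L / real K) + \<tau>'"
          using False G n u
          by (intro energy_trace_approx[OF _ K, where u = u])
             (auto simp: latent_bad_def not_le sets_eq_imp_space_eq[OF sets_edge_law])
        then show False using G small by auto
      qed
    qed
    then have "emeasure (edge_law W n u) ?A \<le> emeasure (edge_law W n u) ?Dev"
      using u n \<open>0 < \<tau>\<close> by (intro emeasure_mono measure_edge_law_degree_deviation(1)) auto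
    also have "\<dots> \<le> ennreal (real n * (2 * exp (- 2 * real n * \<tau>\<^sup>2)))"
      unfolding edge.emeasure_eq_measure
      using measure_edge_law_degree_deviation(2)[OF n _ \<open>0 < \<tau>\<close>, of u] u by (simp add: ennreal_leI)
    finally show ?thesis by (simp add: add_increasing2)
  qed
qed

lemma measure_graphon_energy_deviation:
  fixes K :: nat
  assumes n: "2 \<le> n" and K: "1 \<le> K" and "0 < \<tau>" "0 < \<tau>'"
    and small: "trace_approx_const f / real n + energy_lipschitz_const f * (2 * \<tau> + 1 / real n + 2 * L / real K) + \<tau>' < t"
  shows "measure (graphon_law W n) {G \<in> space (graph_space n). t \<le> \<bar>mtrace n (energy_mat n f G) / real n - limit_const f\<bar>}
    \<le> (2 * real n + 2 * real (Suc K)) * exp (- (2 * \<tau>\<^sup>2) * real n)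
       + 2 * exp (- (\<tau>'\<^sup>2 / (2 * (energy_sup f)\<^sup>2)) * real n)"
proof -
  interpret latent: prob_space "latent_law n" by (rule prob_space_latent_law)
  define A where "A = {G \<in> space (graph_space n). t \<le> \<bar>mtrace n (energy_mat n f G) / real n - limit_const f\<bar>}"
  define Bad where "Bad = latent_bad f n K \<tau> \<tau>'"
  define E where "E = real n * (2 * exp (- 2 * real n * \<tau>\<^sup>2))"
  have A: "A \<in> sets (graph_space n)"
    unfolding A_def using borel_measurable_mtrace_energy_mat by measurable
  have Bad: "Bad \<in> sets (latent_law n)" "measure (latent_law n) Bad
      \<le> 2 * exp (- (\<tau>'\<^sup>2 / (2 * (energy_sup f)\<^sup>2)) * real n) + real (Suc K) * (2 * exp (- 2 * real n * \<tau>\<^sup>2))"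
    unfolding Bad_def using n \<open>0 < \<tau>\<close> \<open>0 < \<tau>'\<close> by (intro measure_latent_bad; simp)+
  have "emeasure (graphon_law W n) A \<le> (\<integral>\<^sup>+u. emeasure (edge_law W n u) A \<partial>latent_law n)"
    by (rule emeasure_graphon_law_le[OF A])
  also have "\<dots> \<le> (\<integral>\<^sup>+u. ennreal E + indicator Bad u \<partial>latent_law n)"
    using AE_space AE_latent_law[of n] unfolding A_def E_def Bad_def
    by (intro nn_integral_mono_AE)
       (elim AE_mp, intro AE_I2 impI emeasure_edge_law_energy_deviation[OF n K \<open>0 < \<tau>\<close> small])
  also have "\<dots> = ennreal (E + measure (latent_law n) Bad)"
    using Bad(1) by (simp add: nn_integral_add latent.emeasure_eq_measure latent.prob_space ennreal_plus E_def)
  also have "\<dots> \<le> ennreal ((2 * real n + 2 * real (Suc K)) * exp (- (2 * \<tau>\<^sup>2) * real n)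
       + 2 * exp (- (\<tau>'\<^sup>2 / (2 * (energy_sup f)\<^sup>2)) * real n))"
    using Bad(2) by (intro ennreal_leI) (simp add: E_def algebra_simps)
  finally show ?thesis
    unfolding A_def measure_def by (intro enn2real_leI) auto
qed

lemma measure_sample_deviation:
  assumes "1 \<le> n" "0 < d" "0 < t" and P: "prob_space (sample_law W n d)"
  shows "measure (sample_law W n d) {x \<in> space (sample_law W n d). 2 * t \<le> \<bar>h_stat n d f (fst x) (snd x) - limit_const f\<bar>}
    \<le> 2 * (energy_mat_bound f)\<^sup>2 / (t\<^sup>2 * real d * real n)
      + measure (graphon_law W n) {G \<in> space (graph_space n). t \<le> \<bar>mtrace n (energy_mat n f G) / real n - limit_const f\<bar>}"
proof -
  interpret sample: prob_space "sample_law W n d" by (rule P)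
  define E where "E = {x \<in> space (sample_law W n d). t \<le> \<bar>h_stat n d f (fst x) (snd x) - mtrace n (energy_mat n f (fst x)) / real n\<bar>}"
  define A where "A = {G \<in> space (graph_space n). t \<le> \<bar>mtrace n (energy_mat n f G) / real n - limit_const f\<bar>}"
  have "(\<lambda>x. mtrace n (energy_mat n f (fst x)) / real n) \<in> borel_measurable (sample_law W n d)"
    using borel_measurable_mtrace_energy_mat by (simp add: measurable_cong_sets[OF sets_sample_law refl])
  then have E: "E \<in> sets (sample_law W n d)"
    using borel_measurable_h_stat_sample_law unfolding E_def by measurable
  have A: "A \<in> sets (graph_space n)"
    unfolding A_def using borel_measurable_mtrace_energy_mat by measurable
  then have AZ: "A \<times> space (gauss_law n d) \<in> sets (sample_law W n d)"
    by (simp add: sets_sample_law)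
  have "{x \<in> space (sample_law W n d). 2 * t \<le> \<bar>h_stat n d f (fst x) (snd x) - limit_const f\<bar>}
      \<subseteq> E \<union> A \<times> space (gauss_law n d)"
    by (auto simp: E_def A_def space_sample_law)
  then have "measure (sample_law W n d) {x \<in> space (sample_law W n d). 2 * t \<le> \<bar>h_stat n d f (fst x) (snd x) - limit_const f\<bar>}
      \<le> measure (sample_law W n d) E + measure (sample_law W n d) (A \<times> space (gauss_law n d))"
    using E AZ by (intro order.trans[OF sample.finite_measure_mono measure_Un_le]) auto
  then show ?thesis
    using measure_sample_law_gauss_deviation[of n d t W f, OF _ assms(2-4)] assms(1)
      measure_sample_law_Times[OF A, of W d]
    unfolding E_def A_def by simp
qed

lemma graphon_deviation_parameters:
  assumes "0 < t"
  obtains \<tau> \<tau>' :: real and K :: nat where "0 < \<tau>" "0 < \<tau>'" "1 \<le> K"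
    and "eventually (\<lambda>n. trace_approx_const f / real n
           + energy_lipschitz_const f * (2 * \<tau> + 1 / real n + 2 * L / real K) + \<tau>' < t) sequentially"
proof -
  define Lc where "Lc = energy_lipschitz_const f"
  define \<tau> where "\<tau> = t / (16 * (Lc + 1))"
  define K where "K = nat \<lceil>16 * L * (Lc + 1) / t\<rceil> + 1"
  have Lc: "0 \<le> Lc"
    unfolding Lc_def by (rule energy_lipschitz_const_nonneg)
  have K: "1 \<le> K" "16 * L * (Lc + 1) / t \<le> real K"
    unfolding K_def by linarith+
  have "Lc * (2 * \<tau>) \<le> t / 8"
    using assms Lc by (simp add: \<tau>_def field_simps)
  moreover have "Lc * (2 * L / real K) \<le> t / 8"
    using K assms Lc lipschitz_const_nonneg by (simp add: field_simps)
  moreover have "Lc * (2 * \<tau> + 0 + 2 * L / real K) = Lc * (2 * \<tau>) + Lc * (2 * L / real K)"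
    by (simp add: algebra_simps)
  ultimately have "Lc * (2 * \<tau> + 0 + 2 * L / real K) + t / 4 < t"
    using assms by linarith
  moreover have "(\<lambda>n. trace_approx_const f / real n + Lc * (2 * \<tau> + 1 / real n + 2 * L / real K) + t / 4)
      \<longlonglongrightarrow> 0 + Lc * (2 * \<tau> + 0 + 2 * L / real K) + t / 4"
    by (intro tendsto_intros)
  ultimately have "eventually (\<lambda>n. trace_approx_const f / real n
      + Lc * (2 * \<tau> + 1 / real n + 2 * L / real K) + t / 4 < t) sequentially"
    by (intro order_tendstoD(2)) auto
  moreover have "0 < \<tau>" "0 < t / 4"
    using assms Lc by (simp_all add: \<tau>_def)
  ultimately show ?thesis
    using K(1) that unfolding Lc_def by blast
qed

lemma summable_measure_graphon_energy_deviation: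
  assumes "0 < t"
  shows "summable (\<lambda>n. measure (graphon_law W n)
           {G \<in> space (graph_space n). t \<le> \<bar>mtrace n (energy_mat n f G) / real n - limit_const f\<bar>})"
proof -
  obtain \<tau> \<tau>' K where \<tau>: "0 < \<tau>" "0 < \<tau>'" and K: "1 \<le> K" and small: "eventually (\<lambda>n. trace_approx_const f / real n
      + energy_lipschitz_const f * (2 * \<tau> + 1 / real n + 2 * L / real K) + \<tau>' < t) sequentially"
    using graphon_deviation_parameters[OF assms] .
  let ?b = "\<lambda>n. (2 * real n + 2 * real (Suc K)) * exp (- (2 * \<tau>\<^sup>2) * real n)
               + 2 * exp (- (\<tau>'\<^sup>2 / (2 * (energy_sup f)\<^sup>2)) * real n)"
  show ?thesis
  proof (rule summable_comparison_test_ev)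
    have "0 < \<tau>'\<^sup>2 / (2 * (energy_sup f)\<^sup>2)"
      using \<tau> energy_sup_ge_1[of f] by simp
    then show "summable ?b"
      using summable_linear_times_exp[of "\<tau>'\<^sup>2 / (2 * (energy_sup f)\<^sup>2)" 0 2] \<tau>
      by (intro summable_add summable_linear_times_exp) auto
    show "eventually (\<lambda>n. norm (measure (graphon_law W n)
        {G \<in> space (graph_space n). t \<le> \<bar>mtrace n (energy_mat n f G) / real n - limit_const f\<bar>}) \<le> ?b n) sequentially"
      using small eventually_ge_at_top[of 2]
      by eventually_elim (use measure_graphon_energy_deviation[OF _ K \<tau>] in simp)
  qed
qed

lemma summable_measure_sample_deviation:
  fixes d :: "nat \<Rightarrow> nat"
  assumes "1 < \<alpha>" and d_pos: "\<And>n. 1 \<le> n \<Longrightarrow> 0 < d n"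
    and d_hi: "\<And>n. 1 \<le> n \<Longrightarrow> real n \<le> real (d n) powr \<alpha>"
    and P: "\<And>n. 1 \<le> n \<Longrightarrow> prob_space (sample_law W n (d n))" and "0 < \<epsilon>"
  shows "summable (\<lambda>n. measure (sample_law W n (d n)) {x \<in> space (sample_law W n (d n)).
           \<epsilon> \<le> \<bar>h_stat n (d n) f (fst x) (snd x) - limit_const f\<bar>})"
proof (rule summable_comparison_test_ev)
  let ?c = "2 * (energy_mat_bound f)\<^sup>2 / (\<epsilon> / 2)\<^sup>2"
  show "summable (\<lambda>n. ?c / (real (d n) * real n) + measure (graphon_law W n)
      {G \<in> space (graph_space n). \<epsilon> / 2 \<le> \<bar>mtrace n (energy_mat n f G) / real n - limit_const f\<bar>})"
    using \<open>0 < \<epsilon>\<close>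
    by (intro summable_add summable_inverse_mult_if_powr_bounded[OF assms(1-3)]
        summable_measure_graphon_energy_deviation) auto
  show "eventually (\<lambda>n. norm (measure (sample_law W n (d n)) {x \<in> space (sample_law W n (d n)).
           \<epsilon> \<le> \<bar>h_stat n (d n) f (fst x) (snd x) - limit_const f\<bar>})
      \<le> ?c / (real (d n) * real n) + measure (graphon_law W n)
      {G \<in> space (graph_space n). \<epsilon> / 2 \<le> \<bar>mtrace n (energy_mat n f G) / real n - limit_const f\<bar>}) sequentially"
    using eventually_ge_at_top[of 1]
  proof eventually_elim
    case (elim n)
    then show ?case
      using measure_sample_deviation[OF elim d_pos[OF elim] _ P[OF elim], of "\<epsilon> / 2"] \<open>0 < \<epsilon>\<close>
      by (simp add: mult.assoc)
  qed
qed

end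

theorem theorem2:
  fixes W :: "real \<Rightarrow> real \<Rightarrow> real" and L \<alpha> :: real and f :: "real poly"
    and d :: "nat \<Rightarrow> nat" and M :: "'a measure"
    and G :: "nat \<Rightarrow> 'a \<Rightarrow> (nat \<times> nat \<Rightarrow> bool)"
    and Z :: "nat \<Rightarrow> 'a \<Rightarrow> (nat \<times> nat \<Rightarrow> real)"
  assumes W_range: "\<And>x y. x \<in> {0..1} \<Longrightarrow> y \<in> {0..1} \<Longrightarrow> W x y \<in> {0..1}"
    and W_sym: "\<And>x y. x \<in> {0..1} \<Longrightarrow> y \<in> {0..1} \<Longrightarrow> W x y = W y x"
    and W_lip: "\<And>x y x' y'. x \<in> {0..1} \<Longrightarrow> y \<in> {0..1} \<Longrightarrow> x' \<in> {0..1} \<Longrightarrow> y' \<in> {0..1} \<Longrightarrow>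
                  \<bar>W x y - W x' y'\<bar> \<le> L * (\<bar>x - x'\<bar> + \<bar>y - y'\<bar>)"
    and alpha: "\<alpha> > 1"
    and d_pos: "\<And>n. n \<ge> 1 \<Longrightarrow> d n > 0"
    and d_lo: "\<And>n. n \<ge> 1 \<Longrightarrow> real (d n) powr (1 / \<alpha>) \<le> real n"
    and d_hi: "\<And>n. n \<ge> 1 \<Longrightarrow> real n \<le> real (d n) powr \<alpha>"
    and M: "prob_space M"
    and meas: "\<And>n. n \<ge> 1 \<Longrightarrow> (\<lambda>\<omega>. (G n \<omega>, Z n \<omega>)) \<in> measurable M (sample_law W n (d n))"
    and law: "\<And>n. n \<ge> 1 \<Longrightarrow> distr M (sample_law W n (d n)) (\<lambda>\<omega>. (G n \<omega>, Z n \<omega>)) = sample_law W n (d n)"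
  shows "AE \<omega> in M. (\<lambda>n. h_stat n (d n) f (G n \<omega>) (Z n \<omega>))
           \<longlonglongrightarrow> (LBINT x=0..1. graphon_degree W x * (poly f (graphon_degree W x))\<^sup>2)"
proof -
  interpret lipschitz_graphon W L
    using W_range W_sym W_lip by unfold_locales
  have P: "prob_space (sample_law W n (d n))" if "1 \<le> n" for n
    using prob_space.prob_space_distr[OF M meas[OF that]] law[OF that] by simp
  let ?h = "\<lambda>n x. h_stat n (d n) f (fst x) (snd x)"
  have "AE \<omega> in M. (\<lambda>n. ?h n (G n \<omega>, Z n \<omega>)) \<longlonglongrightarrow> limit_const f"
  proof (rule AE_tendsto_of_summable_deviations[OF M])
    show "eventually (\<lambda>n. (\<lambda>\<omega>. ?h n (G n \<omega>, Z n \<omega>)) \<in> borel_measurable M) sequentially"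
      using eventually_ge_at_top[of 1]
      by eventually_elim (rule measurable_compose[OF meas borel_measurable_h_stat_sample_law])
    show "summable (\<lambda>n. measure M {\<omega> \<in> space M. \<epsilon> \<le> \<bar>?h n (G n \<omega>, Z n \<omega>) - limit_const f\<bar>})"
      if "0 < \<epsilon>" for \<epsilon>
      using meas law borel_measurable_h_stat_sample_law summable_measure_sample_deviation[OF alpha d_pos d_hi P that]
      by (rule summable_measure_deviation_distr[where N = 1]) auto
  qed
  then show ?thesis
    by (simp add: limit_const_eq)
qed

end
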